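(* Let $n\ge1$. For $\mathcal C=\langle\theta\rangle$, the C*-algebra $A_{\mathcal C}(n)$ is the universal unital C*-algebra generated by elements $u_{ij}$, $1\le i,j\le n$, such that (i) each $u_{ij}$ is a local symmetry, i.e. $u_{ij}=u_{ij}^*$ and $u_{ij}^2$ is a projection; (ii) $\sum_k u_{ik}^2=\sum_k u_{kj}^2=1$ for all $i,j$; (iii) $u_{ij}^2u_{kl}^2=u_{kl}^2u_{ij}^2$ for all $i,j,k,l$. For $\mathcal C=\langle\rho\rangle$, $A_{\mathcal C}(n)=C(H_n^{[\infty]})$ is the universal unital C*-algebra generated by $u_{ij}$, $1\le i,j\le n$, satisfying (i), (ii) and (iv) $u_{ij}^2u_{kl}=u_{kl}u_{ij}^2$ for all $i,j,k,l$.
   Context: A partition $p\in P(k,l)$ is a partition of $k$ ordered upper points $1,\dots,k$ and $l$ ordered lower points $1',\dots,l'$ into blocks; a category of partitions is a subset of $P=\bigcup P(k,l)$ containing the pair partition $\sqcap\in P(0,2)$ and the identity partition $|\in P(1,1)$ and closed under tensor product, composition, involution and rotation; $\langle p\rangle$ is the smallest such category containing $p$. The fat crossing $\theta\in P(4,4)$ has blocks $\{1,2,3',4'\}$ and $\{3,4,1',2'\}$; the pair positioner $\rho\in P(3,3)$ has blocks $\{1,2,2',3'\}$ and $\{3,1'\}$. For $p\in P(k,l)$ and $n\in\mathbb N$, $T_p:(\mathbb C^n)^{\otimes k}\to(\mathbb C^n)^{\otimes l}$ is the linear map $T_p(e_{i_1}\otimes\cdots\otimes e_{i_k})=\sum_{j_1,\dots,j_l=1}^n\delta_p(i,j)\,e_{j_1}\otimes\cdots\otimes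 e_{j_l}$, where $\delta_p(i,j)=1$ if, labelling upper point $r$ by $i_r$ and lower point $s'$ by $j_s$, every block of $p$ carries only equal labels, and $\delta_p(i,j)=0$ otherwise. For a unital C*-algebra $A$ and $u=(u_{ij})\in M_n(A)$, $u^{\otimes k}\in M_{n^k}(A)$ has entries $u_{i_1j_1}\cdots u_{i_kj_k}$, and $T\in\mathrm{Hom}(u^{\otimes k},u^{\otimes l})$ means $(T\otimes1)u^{\otimes k}=u^{\otimes l}(T\otimes1)$. For a category $\mathcal C$ and $n\ge1$, $A_{\mathcal C}(n)$ is the universal unital C*-algebra generated by self-adjoint elements $u_{ij}$, $1\le i,j\le n$, such that $u=(u_{ij})$ is orthogonal ($uu^t=u^tu=1$) and $T_p\in\mathrm{Hom}(u^{\otimes k},u^{\otimes l})$ for all $p\in\mathcal C\cap P(k,l)$; together with $\Delta(u_{ij})=\sum_ku_{ik}\otimes u_{kj}$ and fundamental corepresentation $u_n=u$ it is the easy quantum group of $\mathcal C$. $C(H_n^{[\infty]}):=A_{\langle\rho\rangle}(n)$. *)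

theory Defs
  imports Complex_Main "HOL-Library.FuncSet"
begin

text \<open>Complex scalar multiplication is given by cscale,
compatible with the real scalar multiplication of the underlying real Banach algebra.\<close>

class unital_cstar_algebra = real_normed_algebra_1 + banach +
  fixes cstar :: "'a \<Rightarrow> 'a"
    and cscale :: "complex \<Rightarrow> 'a \<Rightarrow> 'a"
  assumes cscale_add_right: "cscale a (x + y) = cscale a x + cscale a y"
    and cscale_add_left: "cscale (a + b) x = cscale a x + cscale b x"
    and cscale_mult: "cscale (a * b) x = cscale a (cscale b x)"
    and cscale_of_real: "cscale (complex_of_real r) x = scaleR r x"
    and cscale_mult_left: "cscale a (x * y) = cscale a x * y"
    and cscale_mult_right: "cscale a (x * y) = x * cscale a y"
    and norm_cscale: "norm (cscale a x) = cmod a * norm x"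
    and cstar_cstar: "cstar (cstar x) = x"
    and cstar_add: "cstar (x + y) = cstar x + cstar y"
    and cstar_mult: "cstar (x * y) = cstar y * cstar x"
    and cstar_cscale: "cstar (cscale a x) = cscale (cnj a) (cstar x)"
    and cstar_identity: "norm (cstar x * x) = (norm x)\<^sup>2"

text \<open>Points: Inl r is the upper point r+1, Inr s is the lower point (s+1)' (0-based).
A partition in P(k,l) is a triple (k,l,R), R an equivalence relation on the points
(its equivalence classes are the blocks).\<close>

type_synonym pt = "nat + nat"
type_synonym partition = "nat \<times> nat \<times> (pt \<Rightarrow> pt \<Rightarrow> bool)"

definition pts :: "nat \<Rightarrow> nat \<Rightarrow> pt set" where
  "pts k l = Inl ` {..<k} \<union> Inr ` {..<l}"

definition mk_part :: "nat \<Rightarrow> nat \<Rightarrow> (pt \<Rightarrow> nat) \<Rightarrow> partition" where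
  "mk_part k l f = (k, l, \<lambda>x y. x \<in> pts k l \<and> y \<in> pts k l \<and> f x = f y)"

definition p_pair :: partition where "p_pair = mk_part 0 2 (\<lambda>_. 0)"
definition p_id :: partition where "p_id = mk_part 1 1 (\<lambda>_. 0)"

text \<open>fat crossing: blocks {1,2,3',4'}, {3,4,1',2'}\<close>
definition p_theta :: partition where
  "p_theta = mk_part 4 4 (\<lambda>x. case x of Inl i \<Rightarrow> (if i < 2 then 0 else 1)
                                    | Inr j \<Rightarrow> (if j < 2 then 1 else 0))"

text \<open>pair positioner: blocks {1,2,2',3'}, {3,1'}\<close>
definition p_rho :: partition where
  "p_rho = mk_part 3 3 (\<lambda>x. case x of Inl i \<Rightarrow> (if i < 2 then 0 else 1)
                                  | Inr j \<Rightarrow> (if 1 \<le> j then 0 else 1))"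

definition upper :: "partition \<Rightarrow> nat" where "upper p = fst p"
definition lower :: "partition \<Rightarrow> nat" where "lower p = fst (snd p)"
definition rel :: "partition \<Rightarrow> pt \<Rightarrow> pt \<Rightarrow> bool" where "rel p = snd (snd p)"

fun shift :: "nat \<Rightarrow> nat \<Rightarrow> pt \<Rightarrow> pt" where
  "shift k l (Inl i) = Inl (i + k)"
| "shift k l (Inr j) = Inr (j + l)"

definition p_tensor :: "partition \<Rightarrow> partition \<Rightarrow> partition" where
  "p_tensor p q = (upper p + upper q, lower p + lower q,
     \<lambda>x y. rel p x y \<or> (\<exists>x' y'. x = shift (upper p) (lower p) x' \<and>
                                 y = shift (upper p) (lower p) y' \<and> rel q x' y'))"

text \<open>Composition q p of p in P(k,l) and q in P(l,m): p on top, q below,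
middle points identified and then removed (closed loops are discarded).
Levels: 0 = upper points of p, 1 = middle, 2 = lower points of q.\<close>
fun embP :: "pt \<Rightarrow> nat \<times> nat" where
  "embP (Inl i) = (0, i)" | "embP (Inr j) = (1, j)"
fun embQ :: "pt \<Rightarrow> nat \<times> nat" where
  "embQ (Inl j) = (1, j)" | "embQ (Inr t) = (2, t)"
fun embO :: "pt \<Rightarrow> nat \<times> nat" where
  "embO (Inl i) = (0, i)" | "embO (Inr t) = (2, t)"

definition p_comp :: "partition \<Rightarrow> partition \<Rightarrow> partition" where
  "p_comp q p = (upper p, lower q,
     \<lambda>x y. x \<in> pts (upper p) (lower q) \<and> y \<in> pts (upper p) (lower q) \<and>
       (\<lambda>a b. (\<exists>x' y'. rel p x' y' \<and> a = embP x' \<and> b = embP y') \<or>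
              (\<exists>x' y'. rel q x' y' \<and> a = embQ x' \<and> b = embQ y'))\<^sup>*\<^sup>* (embO x) (embO y))"

fun flip :: "pt \<Rightarrow> pt" where
  "flip (Inl i) = Inr i" | "flip (Inr j) = Inl j"

definition p_inv :: "partition \<Rightarrow> partition" where
  "p_inv p = (lower p, upper p, \<lambda>x y. rel p (flip x) (flip y))"

text \<open>Rotations. Each is given by the map from new points to old points.\<close>
text \<open>Upper left point moved to lower left (needs k >= 1).\<close>
fun rUL :: "pt \<Rightarrow> pt" where
  "rUL (Inl i) = Inl (Suc i)" | "rUL (Inr 0) = Inl 0" | "rUL (Inr (Suc j)) = Inr j"
text \<open>Lower left point moved to upper left (needs l >= 1).\<close>
fun rLL :: "pt \<Rightarrow> pt" where
  "rLL (Inr j) = Inr (Suc j)" | "rLL (Inl 0) = Inr 0" | "rLL (Inl (Suc i)) = Inl i"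
text \<open>Upper right point moved to lower right (needs k >= 1).\<close>
fun rUR :: "nat \<Rightarrow> nat \<Rightarrow> pt \<Rightarrow> pt" where
  "rUR k l (Inl i) = Inl i" | "rUR k l (Inr j) = (if j = l then Inl (k - 1) else Inr j)"
text \<open>Lower right point moved to upper right (needs l >= 1).\<close>
fun rLR :: "nat \<Rightarrow> nat \<Rightarrow> pt \<Rightarrow> pt" where
  "rLR k l (Inr j) = Inr j" | "rLR k l (Inl i) = (if i = k then Inr (l - 1) else Inl i)"

definition p_rot_ul :: "partition \<Rightarrow> partition" where
  "p_rot_ul p = (upper p - 1, lower p + 1, \<lambda>x y. x \<in> pts (upper p - 1) (lower p + 1) \<and>
      y \<in> pts (upper p - 1) (lower p + 1) \<and> rel p (rUL x) (rUL y))"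
definition p_rot_ll :: "partition \<Rightarrow> partition" where
  "p_rot_ll p = (upper p + 1, lower p - 1, \<lambda>x y. x \<in> pts (upper p + 1) (lower p - 1) \<and>
      y \<in> pts (upper p + 1) (lower p - 1) \<and> rel p (rLL x) (rLL y))"
definition p_rot_ur :: "partition \<Rightarrow> partition" where
  "p_rot_ur p = (upper p - 1, lower p + 1, \<lambda>x y. x \<in> pts (upper p - 1) (lower p + 1) \<and>
      y \<in> pts (upper p - 1) (lower p + 1) \<and>
      rel p (rUR (upper p) (lower p) x) (rUR (upper p) (lower p) y))"
definition p_rot_lr :: "partition \<Rightarrow> partition" where
  "p_rot_lr p = (upper p + 1, lower p - 1, \<lambda>x y. x \<in> pts (upper p + 1) (lower p - 1) \<and>
      y \<in> pts (upper p + 1) (lower p - 1) \<and>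
      rel p (rLR (upper p) (lower p) x) (rLR (upper p) (lower p) y))"

inductive_set gen_cat :: "partition \<Rightarrow> partition set" for p :: partition where
  gen: "p \<in> gen_cat p"
| pair: "p_pair \<in> gen_cat p"
| ident: "p_id \<in> gen_cat p"
| tensor: "a \<in> gen_cat p \<Longrightarrow> b \<in> gen_cat p \<Longrightarrow> p_tensor a b \<in> gen_cat p"
| comp: "a \<in> gen_cat p \<Longrightarrow> b \<in> gen_cat p \<Longrightarrow> lower a = upper b \<Longrightarrow> p_comp b a \<in> gen_cat p"
| inv: "a \<in> gen_cat p \<Longrightarrow> p_inv a \<in> gen_cat p"
| rot_ul: "a \<in> gen_cat p \<Longrightarrow> 1 \<le> upper a \<Longrightarrow> p_rot_ul a \<in> gen_cat p"
| rot_ll: "a \<in> gen_cat p \<Longrightarrow> 1 \<le> lower a \<Longrightarrow> p_rot_ll a \<in> gen_cat p"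
| rot_ur: "a \<in> gen_cat p \<Longrightarrow> 1 \<le> upper a \<Longrightarrow> p_rot_ur a \<in> gen_cat p"
| rot_lr: "a \<in> gen_cat p \<Longrightarrow> 1 \<le> lower a \<Longrightarrow> p_rot_lr a \<in> gen_cat p"

text \<open>Multi-indices (labels 0..n-1, 0-based) are functions on {..<k}.
delta_p(i,j) = 1 iff every block carries equal labels.\<close>
definition label :: "(nat \<Rightarrow> nat) \<Rightarrow> (nat \<Rightarrow> nat) \<Rightarrow> pt \<Rightarrow> nat" where
  "label i j x = (case x of Inl r \<Rightarrow> i r | Inr s \<Rightarrow> j s)"

definition delta :: "partition \<Rightarrow> (nat \<Rightarrow> nat) \<Rightarrow> (nat \<Rightarrow> nat) \<Rightarrow> bool" where
  "delta p i j = (\<forall>x y. rel p x y \<longrightarrow> label i j x = label i j y)"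

definition multi_idx :: "nat \<Rightarrow> nat \<Rightarrow> (nat \<Rightarrow> nat) set" where
  "multi_idx n k = PiE {..<k} (\<lambda>_. {..<n})"

text \<open>Entry (i,j) of u^{\<otimes>k}: the ordered product u_{i_1 j_1} \<dots> u_{i_k j_k}.\<close>
definition tens_entry :: "(nat \<Rightarrow> nat \<Rightarrow> 'a::monoid_mult) \<Rightarrow> nat \<Rightarrow> (nat \<Rightarrow> nat) \<Rightarrow> (nat \<Rightarrow> nat) \<Rightarrow> 'a" where
  "tens_entry u k i j = prod_list (map (\<lambda>r. u (i r) (j r)) [0..<k])"

text \<open>T_p \<in> Hom(u^{\<otimes>k}, u^{\<otimes>l}), i.e. (T_p \<otimes> 1) u^{\<otimes>k} = u^{\<otimes>l} (T_p \<otimes> 1),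
written entrywise at (j,i) with j of length l and i of length k. T_p has entry
(j,i) equal to delta_p(i,j).\<close>
definition intertwines :: "nat \<Rightarrow> (nat \<Rightarrow> nat \<Rightarrow> 'a::ring_1) \<Rightarrow> partition \<Rightarrow> bool" where
  "intertwines n u p =
    (\<forall>i \<in> multi_idx n (upper p). \<forall>j \<in> multi_idx n (lower p).
      (\<Sum>i' \<in> multi_idx n (upper p). (if delta p i' j then 1 else 0) * tens_entry u (upper p) i' i)
    = (\<Sum>j' \<in> multi_idx n (lower p). tens_entry u (lower p) j j' * (if delta p i j' then 1 else 0)))"

definition orthogonal_mat :: "nat \<Rightarrow> (nat \<Rightarrow> nat \<Rightarrow> 'a::ring_1) \<Rightarrow> bool" where
  "orthogonal_mat n u =
    ((\<forall>i<n. \<forall>j<n. (\<Sum>k<n. u i k * u j k) = (if i = j then 1 else 0)) \<and>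
     (\<forall>i<n. \<forall>j<n. (\<Sum>k<n. u k i * u k j) = (if i = j then 1 else 0)))"

text \<open>The defining relations of A_C(n) for the generators u_{ij}, i,j < n.\<close>
definition easy_relations :: "partition set \<Rightarrow> nat \<Rightarrow> (nat \<Rightarrow> nat \<Rightarrow> 'a::unital_cstar_algebra) \<Rightarrow> bool" where
  "easy_relations C n u =
    ((\<forall>i<n. \<forall>j<n. cstar (u i j) = u i j) \<and> orthogonal_mat n u \<and>
     (\<forall>p \<in> C. intertwines n u p))"

definition is_projection :: "'a::unital_cstar_algebra \<Rightarrow> bool" where
  "is_projection x = (cstar x = x \<and> x * x = x)"

definition local_symmetry :: "'a::unital_cstar_algebra \<Rightarrow> bool" where
  "local_symmetry x = (cstar x = x \<and> is_projection (x * x))"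

definition rel_i :: "nat \<Rightarrow> (nat \<Rightarrow> nat \<Rightarrow> 'a::unital_cstar_algebra) \<Rightarrow> bool" where
  "rel_i n u = (\<forall>i<n. \<forall>j<n. local_symmetry (u i j))"

definition rel_ii :: "nat \<Rightarrow> (nat \<Rightarrow> nat \<Rightarrow> 'a::unital_cstar_algebra) \<Rightarrow> bool" where
  "rel_ii n u = (\<forall>i<n. \<forall>j<n. (\<Sum>k<n. u i k * u i k) = 1 \<and> (\<Sum>k<n. u k j * u k j) = 1)"

definition rel_iii :: "nat \<Rightarrow> (nat \<Rightarrow> nat \<Rightarrow> 'a::unital_cstar_algebra) \<Rightarrow> bool" where
  "rel_iii n u = (\<forall>i<n. \<forall>j<n. \<forall>k<n. \<forall>l<n.
     (u i j * u i j) * (u k l * u k l) = (u k l * u k l) * (u i j * u i j))"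

definition rel_iv :: "nat \<Rightarrow> (nat \<Rightarrow> nat \<Rightarrow> 'a::unital_cstar_algebra) \<Rightarrow> bool" where
  "rel_iv n u = (\<forall>i<n. \<forall>j<n. \<forall>k<n. \<forall>l<n.
     (u i j * u i j) * u k l = u k l * (u i j * u i j))"

end

theory Submission
  imports Defs
begin

text \<open>
  Both directions reduce to the intertwining relation of the single generator. If u is
  self-adjoint and orthogonal, the integer matrices T in Hom(u^{\<otimes>k}, u^{\<otimes>l}) are closed
  under tensor products, composition (up to the positive factor counting labellings of closed
  loops), transposition and rotation, because u^{\<otimes>k} is unitary; so the relations for the
  generated category are equivalent to those for the generator. For the fat crossing and the pair
  positioner that relation, written out entrywise, says that entries in a common row or column
  have zero product and that the squares commute (with everything, for the pair positioner);
  together with orthogonality this is equivalent to (i)-(iii), resp. (i), (ii), (iv). The key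
  step back is that the squares of a row of local symmetries are commuting projections summing
  to 1, hence mutually orthogonal.
\<close>

lemma cstar_zero[simp]: "cstar (0::'a::unital_cstar_algebra) = 0"
proof -
  have "cstar (0::'a) = cstar (0 + 0)" by simp
  also have "\<dots> = cstar 0 + cstar 0" by (rule cstar_add)
  finally show ?thesis by simp
qed

lemma cstar_sum: "cstar (\<Sum>x\<in>A. f x) = (\<Sum>x\<in>A. cstar (f x :: 'a::unital_cstar_algebra))"
  by (induction A rule: infinite_finite_induct) (simp_all add: cstar_add)

lemma cstar_scaleR: "cstar (r *\<^sub>R (x::'a::unital_cstar_algebra)) = r *\<^sub>R cstar x"
proof -
  have "cstar (r *\<^sub>R x) = cstar (cscale (complex_of_real r) x)" by (simp add: cscale_of_real)
  also have "\<dots> = cscale (cnj (complex_of_real r)) (cstar x)" by (rule cstar_cscale)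
  also have "\<dots> = r *\<^sub>R cstar x" by (simp add: cscale_of_real)
  finally show ?thesis .
qed

lemma cstar_one[simp]: "cstar (1::'a::unital_cstar_algebra) = 1"
proof -
  have "cstar (1::'a) = cstar 1 * cstar (cstar 1)" by (simp add: cstar_cstar)
  also have "\<dots> = cstar (cstar 1 * 1)" by (rule cstar_mult[symmetric])
  also have "\<dots> = 1" by (simp only: mult_1_right cstar_cstar)
  finally show ?thesis .
qed

lemma cstar_of_int[simp]: "cstar (of_int c :: 'a::unital_cstar_algebra) = of_int c"
proof -
  have "(of_int c :: 'a) = real_of_int c *\<^sub>R 1" by (simp add: scaleR_conv_of_real)
  then show ?thesis by (simp add: cstar_scaleR)
qed

lemma cstar_diff: "cstar (x - y) = cstar x - cstar (y :: 'a::unital_cstar_algebra)"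
  by (metis cstar_add diff_add_cancel eq_diff_eq)

lemma of_int_mult_mult_interchange:
  "(of_int a * of_int b :: 'a::ring_1) * (x * y) = (of_int a * x) * (of_int b * y)"
  "(x * of_int a) * (y * of_int b) = (x * y) * (of_int a * of_int b :: 'a::ring_1)"
  by (metis mult.assoc mult_of_int_commute)+

lemma mult_of_int_left_commute: "x * (of_int a * y) = (of_int a :: 'a::ring_1) * (x * y)"
  by (metis mult.assoc mult_of_int_commute)

lemma sum_mult_delta:
  assumes "finite A" "i \<in> A"
  shows "(\<Sum>b\<in>A. f b * (if b = i then 1 else 0)) = (f i :: 'a::ring_1)"
    and "(\<Sum>b\<in>A. f b * (if i = b then 1 else 0)) = f i"
proof -
  have "(\<Sum>b\<in>A. f b * (if b = i then 1 else 0)) = (\<Sum>b\<in>A. if b = i then f b else 0)"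
    by (rule sum.cong) auto
  then show "(\<Sum>b\<in>A. f b * (if b = i then 1 else 0)) = f i"
    using assms by simp
  then show "(\<Sum>b\<in>A. f b * (if i = b then 1 else 0)) = f i"
    by (simp add: eq_commute)
qed

lemma sum_nested_regroup:
  fixes X :: "'b \<Rightarrow> 'a::ring_1"
  shows "(\<Sum>j\<in>A. X j * (\<Sum>b\<in>B. T b j * (\<Sum>d\<in>C. Y d b * Z d))) =
    (\<Sum>d\<in>C. (\<Sum>j\<in>A. X j * (\<Sum>b\<in>B. T b j * Y d b)) * Z d)"
  by (simp add: sum_distrib_left sum_distrib_right mult.assoc sum.swap[of _ C B] sum.swap[of _ C A])

lemma sum_of_int_mult_swap:
  fixes X :: "'b \<Rightarrow> 'a::ring_1"
  shows "(\<Sum>j\<in>A. X j * (\<Sum>c\<in>B. of_int (T c) * Y c j)) = (\<Sum>c\<in>B. of_int (T c) * (\<Sum>j\<in>A. X j * Y c j))"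
  by (simp add: sum_distrib_left mult_of_int_left_commute sum.swap[of _ A])

lemma sum_indicator_mult_if:
  assumes "finite A" "c \<in> A" "\<And>x. x \<in> A \<Longrightarrow> P x \<longleftrightarrow> Q \<and> x = c"
  shows "(\<Sum>x\<in>A. (if P x then 1 else 0) * g x) = (if Q then g c else (0 :: 'a::ring_1))"
    and "(\<Sum>x\<in>A. g x * (if P x then 1 else 0)) = (if Q then g c else (0 :: 'a::ring_1))"
proof -
  have "(\<Sum>x\<in>A. (if P x then 1 else 0) * g x) = (\<Sum>x\<in>A. if Q \<and> x = c then g x else 0)"
    "(\<Sum>x\<in>A. g x * (if P x then 1 else 0)) = (\<Sum>x\<in>A. if Q \<and> x = c then g x else 0)"
    using assms(3) by (auto intro: sum.cong)
  then show "(\<Sum>x\<in>A. (if P x then 1 else 0) * g x) = (if Q then g c else 0)"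
    and "(\<Sum>x\<in>A. g x * (if P x then 1 else 0)) = (if Q then g c else 0)"
    using assms(1,2) by (simp_all add: sum.delta' cong: if_cong)
qed

definition idx_append :: "nat \<Rightarrow> (nat \<Rightarrow> nat) \<Rightarrow> nat \<Rightarrow> (nat \<Rightarrow> nat) \<Rightarrow> nat \<Rightarrow> nat" where
  "idx_append k i k' j = (\<lambda>r. if r < k then i r else if r < k + k' then j (r - k) else undefined)"

definition idx_single :: "nat \<Rightarrow> nat \<Rightarrow> nat" where
  "idx_single a = (\<lambda>r. if r = 0 then a else undefined)"

definition idx_cons :: "nat \<Rightarrow> nat \<Rightarrow> (nat \<Rightarrow> nat) \<Rightarrow> nat \<Rightarrow> nat" where
  "idx_cons l a j = idx_append 1 (idx_single a) l j"

definition idx_snoc :: "nat \<Rightarrow> (nat \<Rightarrow> nat) \<Rightarrow> nat \<Rightarrow> nat \<Rightarrow> nat" where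
  "idx_snoc l j a = idx_append l j 1 (idx_single a)"

lemma multi_idx_iff: "i \<in> multi_idx n k \<longleftrightarrow> (\<forall>r<k. i r < n) \<and> (\<forall>r\<ge>k. i r = undefined)"
  by (auto simp: multi_idx_def PiE_iff extensional_def)

lemma multi_idx_less: "i \<in> multi_idx n k \<Longrightarrow> r < k \<Longrightarrow> i r < n"
  by (simp add: multi_idx_iff)

lemma finite_multi_idx: "finite (multi_idx n k)"
  unfolding multi_idx_def by (rule finite_PiE) auto

lemma multi_idx_zero: "multi_idx n 0 = {\<lambda>_. undefined}"
  by (auto simp: multi_idx_iff)

lemma idx_append_in_multi_idx:
  "i \<in> multi_idx n k \<Longrightarrow> j \<in> multi_idx n k' \<Longrightarrow> idx_append k i k' j \<in> multi_idx n (k + k')"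
  by (auto simp: multi_idx_iff idx_append_def)

lemma idx_append_eq_iff:
  assumes "i \<in> multi_idx n k" "i' \<in> multi_idx n k" "j \<in> multi_idx n k'" "j' \<in> multi_idx n k'"
  shows "idx_append k i k' j = idx_append k i' k' j' \<longleftrightarrow> i = i' \<and> j = j'"
proof
  assume e: "idx_append k i k' j = idx_append k i' k' j'"
  have "i r = i' r" for r
    using fun_cong[OF e, of r] assms by (cases "r < k") (auto simp: idx_append_def multi_idx_iff)
  moreover have "j r = j' r" for r
    using fun_cong[OF e, of "r + k"] assms by (cases "r < k'") (auto simp: idx_append_def multi_idx_iff)
  ultimately show "i = i' \<and> j = j'" by auto
qed simp

lemma multi_idx_add_split:
  assumes "w \<in> multi_idx n (k + k')"
  obtains i j where "i \<in> multi_idx n k" "j \<in> multi_idx n k'" "w = idx_append k i k' j"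
proof
  show "(\<lambda>r. if r < k then w r else undefined) \<in> multi_idx n k"
    and "(\<lambda>r. if r < k' then w (r + k) else undefined) \<in> multi_idx n k'"
    using assms by (auto simp: multi_idx_iff)
  show "w = idx_append k (\<lambda>r. if r < k then w r else undefined) k' (\<lambda>r. if r < k' then w (r + k) else undefined)"
    using assms by (auto simp: multi_idx_iff idx_append_def fun_eq_iff)
qed

lemma bij_betw_idx_append:
  "bij_betw (\<lambda>(i, j). idx_append k i k' j) (multi_idx n k \<times> multi_idx n k') (multi_idx n (k + k'))"
proof (rule bij_betwI')
  fix w assume "w \<in> multi_idx n (k + k')"
  then show "\<exists>x\<in>multi_idx n k \<times> multi_idx n k'. w = (\<lambda>(i, j). idx_append k i k' j) x"
    by (elim multi_idx_add_split) auto
qed (auto simp: idx_append_eq_iff idx_append_in_multi_idx)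

lemma sum_multi_idx_add:
  "(\<Sum>w\<in>multi_idx n (k + k'). f w) = (\<Sum>i\<in>multi_idx n k. \<Sum>j\<in>multi_idx n k'. f (idx_append k i k' j))"
  by (simp add: sum.reindex_bij_betw[symmetric, OF bij_betw_idx_append] sum.cartesian_product split_def)

lemma idx_single_eq_iff: "idx_single a = idx_single b \<longleftrightarrow> a = b"
  by (auto simp: idx_single_def fun_eq_iff)

lemma multi_idx_one: "multi_idx n (Suc 0) = idx_single ` {..<n}"
proof (intro equalityI subsetI)
  fix w assume w: "w \<in> multi_idx n (Suc 0)"
  then have "w = idx_single (w 0)" by (auto simp: multi_idx_iff idx_single_def fun_eq_iff)
  with w show "w \<in> idx_single ` {..<n}" by (auto simp: multi_idx_iff)
qed (auto simp: multi_idx_iff idx_single_def)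

lemma sum_multi_idx_one: "(\<Sum>w\<in>multi_idx n (Suc 0). f w) = (\<Sum>a<n. f (idx_single a))"
  unfolding multi_idx_one by (subst sum.reindex) (auto simp: inj_on_def idx_single_eq_iff)

lemma sum_multi_idx_Suc_cons:
  "(\<Sum>w\<in>multi_idx n (Suc l). f w) = (\<Sum>a<n. \<Sum>j\<in>multi_idx n l. f (idx_cons l a j))"
  using sum_multi_idx_add[where n=n and k=1 and k'=l and f=f] by (simp add: sum_multi_idx_one idx_cons_def)

lemma sum_multi_idx_Suc_snoc:
  "(\<Sum>w\<in>multi_idx n (Suc l). f w) = (\<Sum>j\<in>multi_idx n l. \<Sum>a<n. f (idx_snoc l j a))"
  using sum_multi_idx_add[where n=n and k=l and k'=1 and f=f] by (simp add: sum_multi_idx_one idx_snoc_def)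

lemma multi_idx_Suc_cases_cons:
  assumes "w \<in> multi_idx n (Suc l)"
  obtains a j where "a < n" "j \<in> multi_idx n l" "w = idx_cons l a j"
proof -
  from assms have "w \<in> multi_idx n (Suc 0 + l)" by simp
  then obtain i j where "i \<in> multi_idx n (Suc 0)" "j \<in> multi_idx n l" "w = idx_append (Suc 0) i l j"
    by (rule multi_idx_add_split)
  then show thesis using that by (auto simp: multi_idx_one idx_cons_def)
qed

lemma multi_idx_Suc_cases_snoc:
  assumes "w \<in> multi_idx n (Suc l)"
  obtains a j where "a < n" "j \<in> multi_idx n l" "w = idx_snoc l j a"
proof -
  from assms have "w \<in> multi_idx n (l + Suc 0)" by simp
  then obtain i j where "i \<in> multi_idx n l" "j \<in> multi_idx n (Suc 0)" "w = idx_append l i (Suc 0) j"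
    by (rule multi_idx_add_split)
  then show thesis using that by (auto simp: multi_idx_one idx_snoc_def)
qed

lemma idx_cons_in_multi_idx: "a < n \<Longrightarrow> j \<in> multi_idx n l \<Longrightarrow> idx_cons l a j \<in> multi_idx n (Suc l)"
  using idx_append_in_multi_idx[of "idx_single a" n 1 j l] by (simp add: idx_cons_def multi_idx_one)

lemma idx_snoc_in_multi_idx: "a < n \<Longrightarrow> j \<in> multi_idx n l \<Longrightarrow> idx_snoc l j a \<in> multi_idx n (Suc l)"
  using idx_append_in_multi_idx[of j n l "idx_single a" 1] by (simp add: idx_snoc_def multi_idx_one)

lemma idx_snoc_eq_iff:
  "i \<in> multi_idx n k \<Longrightarrow> i' \<in> multi_idx n k \<Longrightarrow> a < n \<Longrightarrow> a' < n \<Longrightarrow>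
    idx_snoc k i a = idx_snoc k i' a' \<longleftrightarrow> i = i' \<and> a = a'"
  using idx_append_eq_iff[of i n k i' "idx_single a" 1 "idx_single a'"]
  by (simp add: idx_snoc_def multi_idx_one idx_single_eq_iff)

lemma idx_cons_apply [simp]: "idx_cons l a j 0 = a" "s < l \<Longrightarrow> idx_cons l a j (Suc s) = j s"
  by (simp_all add: idx_cons_def idx_append_def idx_single_def)

lemma idx_snoc_apply [simp]: "r < l \<Longrightarrow> idx_snoc l j a r = j r" "idx_snoc l j a l = a"
  by (simp_all add: idx_snoc_def idx_append_def idx_single_def)

lemma tens_entry_zero: "tens_entry u 0 i j = 1"
  by (simp add: tens_entry_def)

lemma tens_entry_single [simp]: "tens_entry u (Suc 0) (idx_single a) (idx_single b) = u a b"
  by (simp add: tens_entry_def idx_single_def)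

lemma tens_entry_idx_append:
  "tens_entry u (k + k') (idx_append k i k' j) (idx_append k i' k' j') = tens_entry u k i i' * tens_entry u k' j j'"
proof -
  let ?f = "\<lambda>r. u (idx_append k i k' j r) (idx_append k i' k' j' r)"
  have "[0..<k + k'] = [0..<k] @ map (\<lambda>r. r + k) [0..<k']"
    by (metis add.commute map_add_upt upt_add_eq_append zero_le)
  moreover have "map ?f [0..<k] = map (\<lambda>r. u (i r) (i' r)) [0..<k]"
    by (rule map_cong) (auto simp: idx_append_def)
  moreover have "map (?f \<circ> (\<lambda>r. r + k)) [0..<k'] = map (\<lambda>r. u (j r) (j' r)) [0..<k']"
    by (rule map_cong) (auto simp: idx_append_def)
  ultimately show ?thesis
    by (simp only: tens_entry_def map_append map_map prod_list.append)
qed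

lemma tens_entry_idx_cons:
  "tens_entry u (Suc l) (idx_cons l a j) (idx_cons l b j') = u a b * tens_entry u l j j'"
  using tens_entry_idx_append[of u 1 l "idx_single a" j "idx_single b" j'] by (simp add: idx_cons_def)

lemma tens_entry_idx_snoc:
  "tens_entry u (Suc l) (idx_snoc l j a) (idx_snoc l j' b) = tens_entry u l j j' * u a b"
  using tens_entry_idx_append[of u l 1 j "idx_single a" j' "idx_single b"] by (simp add: idx_snoc_def)

subsection \<open>Integer matrices intertwining tensor powers\<close>

definition intertwiner :: "nat \<Rightarrow> (nat \<Rightarrow> nat \<Rightarrow> 'a::ring_1) \<Rightarrow> nat \<Rightarrow> nat \<Rightarrow>
    ((nat \<Rightarrow> nat) \<Rightarrow> (nat \<Rightarrow> nat) \<Rightarrow> int) \<Rightarrow> bool" where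
  "intertwiner n u k l T \<longleftrightarrow> (\<forall>i\<in>multi_idx n k. \<forall>j\<in>multi_idx n l.
     (\<Sum>i'\<in>multi_idx n k. of_int (T j i') * tens_entry u k i' i) =
     (\<Sum>j'\<in>multi_idx n l. tens_entry u l j j' * of_int (T j' i)))"

definition Tp :: "partition \<Rightarrow> (nat \<Rightarrow> nat) \<Rightarrow> (nat \<Rightarrow> nat) \<Rightarrow> int" where
  "Tp p j i = (if delta p i j then 1 else 0)"

lemma of_int_Tp: "of_int (Tp p j i) = (if delta p i j then 1 else 0)"
  by (simp add: Tp_def)

lemma intertwines_iff_intertwiner: "intertwines n u p \<longleftrightarrow> intertwiner n u (upper p) (lower p) (Tp p)"
  unfolding intertwines_def intertwiner_def of_int_Tp ..

lemma intertwiner_cong: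
  "(\<And>i j. i \<in> multi_idx n k \<Longrightarrow> j \<in> multi_idx n l \<Longrightarrow> T j i = T' j i) \<Longrightarrow>
    intertwiner n u k l T \<longleftrightarrow> intertwiner n u k l T'"
  unfolding intertwiner_def by (auto intro!: sum.cong)

lemma intertwiner_cancel_scalar:
  fixes u :: "nat \<Rightarrow> nat \<Rightarrow> 'a::real_algebra_1"
  assumes "c \<noteq> 0" and "intertwiner n u k l (\<lambda>j i. c * T j i)"
  shows "intertwiner n u k l T"
  unfolding intertwiner_def
proof (intro ballI)
  fix i j assume "i \<in> multi_idx n k" "j \<in> multi_idx n l"
  let ?L = "\<Sum>i'\<in>multi_idx n k. of_int (T j i') * tens_entry u k i' i"
  let ?R = "\<Sum>j'\<in>multi_idx n l. tens_entry u l j j' * of_int (T j' i)"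
  have "(\<Sum>i'\<in>multi_idx n k. of_int (c * T j i') * tens_entry u k i' i) =
        (\<Sum>j'\<in>multi_idx n l. tens_entry u l j j' * of_int (c * T j' i))"
    using assms(2) \<open>i \<in> _\<close> \<open>j \<in> _\<close> unfolding intertwiner_def by blast
  moreover have "(\<Sum>i'\<in>multi_idx n k. of_int (c * T j i') * tens_entry u k i' i) = of_int c * ?L"
    by (simp add: sum_distrib_left mult.assoc)
  moreover have "(\<Sum>j'\<in>multi_idx n l. tens_entry u l j j' * of_int (c * T j' i)) = of_int c * ?R"
    unfolding sum_distrib_left
    by (rule sum.cong) (simp_all add: of_int_mult, metis mult.assoc mult_of_int_commute)
  ultimately have "of_int c * ?L = of_int c * ?R" by simp
  then have "real_of_int c *\<^sub>R (?L - ?R) = 0"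
    by (simp add: scaleR_conv_of_real right_diff_distrib)
  with assms(1) show "?L = ?R" by simp
qed

lemma intertwiner_comp:
  fixes u :: "nat \<Rightarrow> nat \<Rightarrow> 'a::ring_1"
  assumes A: "intertwiner n u k l A" and B: "intertwiner n u l m B"
  shows "intertwiner n u k m (\<lambda>j i. \<Sum>v\<in>multi_idx n l. B j v * A v i)"
  unfolding intertwiner_def
proof (intro ballI)
  fix i j assume i: "i \<in> multi_idx n k" and j: "j \<in> multi_idx n m"
  let ?U = "tens_entry u"
  have "(\<Sum>i'\<in>multi_idx n k. of_int (\<Sum>v\<in>multi_idx n l. B j v * A v i') * ?U k i' i)
      = (\<Sum>v\<in>multi_idx n l. of_int (B j v) * (\<Sum>i'\<in>multi_idx n k. of_int (A v i') * ?U k i' i))"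
    by (simp add: sum_distrib_left sum_distrib_right mult.assoc sum.swap[of _ "multi_idx n k"])
  also have "\<dots> = (\<Sum>v\<in>multi_idx n l. of_int (B j v) * (\<Sum>v'\<in>multi_idx n l. ?U l v v' * of_int (A v' i)))"
    using A i unfolding intertwiner_def by (intro sum.cong refl) auto
  also have "\<dots> = (\<Sum>v'\<in>multi_idx n l. (\<Sum>v\<in>multi_idx n l. of_int (B j v) * ?U l v v') * of_int (A v' i))"
    by (simp add: sum_distrib_left sum_distrib_right mult.assoc) (rule sum.swap)
  also have "\<dots> = (\<Sum>v'\<in>multi_idx n l. (\<Sum>j'\<in>multi_idx n m. ?U m j j' * of_int (B j' v')) * of_int (A v' i))"
    using B j unfolding intertwiner_def by (intro sum.cong refl) auto
  also have "\<dots> = (\<Sum>j'\<in>multi_idx n m. ?U m j j' * of_int (\<Sum>v\<in>multi_idx n l. B j' v * A v i))"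
    by (simp add: sum_distrib_left sum_distrib_right mult.assoc sum.swap[of _ "multi_idx n l" "multi_idx n m"])
  finally show "(\<Sum>i'\<in>multi_idx n k. of_int (\<Sum>v\<in>multi_idx n l. B j v * A v i') * ?U k i' i)
      = (\<Sum>j'\<in>multi_idx n m. ?U m j j' * of_int (\<Sum>v\<in>multi_idx n l. B j' v * A v i))" .
qed

lemma intertwiner_tensor:
  fixes u :: "nat \<Rightarrow> nat \<Rightarrow> 'a::ring_1"
  assumes A: "intertwiner n u k l A" and B: "intertwiner n u k' l' B"
    and C: "\<And>i1 i2 j1 j2. i1 \<in> multi_idx n k \<Longrightarrow> i2 \<in> multi_idx n k' \<Longrightarrow> j1 \<in> multi_idx n l \<Longrightarrow>
      j2 \<in> multi_idx n l' \<Longrightarrow> C (idx_append l j1 l' j2) (idx_append k i1 k' i2) = A j1 i1 * B j2 i2"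
  shows "intertwiner n u (k + k') (l + l') C"
  unfolding intertwiner_def
proof (intro ballI)
  fix i j assume "i \<in> multi_idx n (k + k')" and "j \<in> multi_idx n (l + l')"
  then obtain i1 i2 j1 j2 where i1: "i1 \<in> multi_idx n k" and i2: "i2 \<in> multi_idx n k'"
    and j1: "j1 \<in> multi_idx n l" and j2: "j2 \<in> multi_idx n l'"
    and i: "i = idx_append k i1 k' i2" and j: "j = idx_append l j1 l' j2"
    by (metis multi_idx_add_split)
  let ?U = "tens_entry u"
  have "(\<Sum>w\<in>multi_idx n (k + k'). of_int (C j w) * ?U (k + k') w i)
      = (\<Sum>a\<in>multi_idx n k. \<Sum>b\<in>multi_idx n k'. (of_int (A j1 a) * ?U k a i1) * (of_int (B j2 b) * ?U k' b i2))"
    unfolding sum_multi_idx_add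
    by (intro sum.cong refl) (simp add: i j C j1 j2 tens_entry_idx_append of_int_mult_mult_interchange)
  also have "\<dots> = (\<Sum>a\<in>multi_idx n k. of_int (A j1 a) * ?U k a i1) * (\<Sum>b\<in>multi_idx n k'. of_int (B j2 b) * ?U k' b i2)"
    by (simp add: sum_product)
  also have "\<dots> = (\<Sum>a\<in>multi_idx n l. ?U l j1 a * of_int (A a i1)) * (\<Sum>b\<in>multi_idx n l'. ?U l' j2 b * of_int (B b i2))"
    using A B i1 i2 j1 j2 unfolding intertwiner_def by simp
  also have "\<dots> = (\<Sum>a\<in>multi_idx n l. \<Sum>b\<in>multi_idx n l'. (?U l j1 a * ?U l' j2 b) * of_int (A a i1 * B b i2))"
    by (simp add: sum_product of_int_mult_mult_interchange)
  also have "\<dots> = (\<Sum>w\<in>multi_idx n (l + l'). ?U (l + l') j w * of_int (C w i))"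
    unfolding sum_multi_idx_add
    by (intro sum.cong refl) (simp add: i j C i1 i2 tens_entry_idx_append)
  finally show "(\<Sum>w\<in>multi_idx n (k + k'). of_int (C j w) * ?U (k + k') w i)
      = (\<Sum>w\<in>multi_idx n (l + l'). ?U (l + l') j w * of_int (C w i))" .
qed

text \<open>Rotating a point from the upper to the lower row: multiply the old relation by one more
  factor u and contract, using u u^t = 1.\<close>

lemma intertwiner_rotate_upper_left:
  fixes u :: "nat \<Rightarrow> nat \<Rightarrow> 'a::ring_1"
  assumes h: "intertwiner n u (Suc k) l T"
    and orth: "\<And>a c. a < n \<Longrightarrow> c < n \<Longrightarrow> (\<Sum>b<n. u a b * u c b) = (if a = c then 1 else 0)"
    and T': "\<And>a j i. a < n \<Longrightarrow> j \<in> multi_idx n l \<Longrightarrow> i \<in> multi_idx n k \<Longrightarrow>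
      T' (idx_cons l a j) i = T j (idx_cons k a i)"
  shows "intertwiner n u k (Suc l) T'"
  unfolding intertwiner_def
proof (intro ballI)
  fix i w assume i: "i \<in> multi_idx n k" and w: "w \<in> multi_idx n (Suc l)"
  let ?U = "tens_entry u"
  obtain a j where a: "a < n" and j: "j \<in> multi_idx n l" and we: "w = idx_cons l a j"
    using w by (rule multi_idx_Suc_cases_cons)
  have "(\<Sum>w'\<in>multi_idx n (Suc l). ?U (Suc l) w w' * of_int (T' w' i))
      = (\<Sum>b<n. \<Sum>j'\<in>multi_idx n l. ?U (Suc l) w (idx_cons l b j') * of_int (T' (idx_cons l b j') i))"
    by (rule sum_multi_idx_Suc_cons)
  also have "\<dots> = (\<Sum>b<n. u a b * (\<Sum>j'\<in>multi_idx n l. ?U l j j' * of_int (T j' (idx_cons k b i))))"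
    by (intro sum.cong refl) (simp add: we tens_entry_idx_cons T' i sum_distrib_left mult.assoc)
  also have "\<dots> = (\<Sum>b<n. u a b * (\<Sum>v\<in>multi_idx n (Suc k). of_int (T j v) * ?U (Suc k) v (idx_cons k b i)))"
    using h j i idx_cons_in_multi_idx unfolding intertwiner_def by (intro sum.cong refl) auto
  also have "\<dots> = (\<Sum>b<n. \<Sum>c<n. \<Sum>i''\<in>multi_idx n k. of_int (T j (idx_cons k c i'')) * (u a b * u c b * ?U k i'' i))"
    by (simp add: sum_multi_idx_Suc_cons tens_entry_idx_cons sum_distrib_left mult_of_int_left_commute mult.assoc)
  also have "\<dots> = (\<Sum>c<n. \<Sum>b<n. \<Sum>i''\<in>multi_idx n k. of_int (T j (idx_cons k c i'')) * (u a b * u c b * ?U k i'' i))"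
    by (rule sum.swap)
  also have "\<dots> = (\<Sum>c<n. \<Sum>i''\<in>multi_idx n k. of_int (T j (idx_cons k c i'')) * ((\<Sum>b<n. u a b * u c b) * ?U k i'' i))"
    by (simp add: sum_distrib_left sum_distrib_right sum.swap[of _ "{..<n}" "multi_idx n k"])
  also have "\<dots> = (\<Sum>c<n. \<Sum>i''\<in>multi_idx n k. (if c = a then of_int (T j (idx_cons k a i'')) * ?U k i'' i else 0))"
    by (intro sum.cong refl) (auto simp: orth a)
  also have "\<dots> = (\<Sum>c<n. if c = a then (\<Sum>i''\<in>multi_idx n k. of_int (T j (idx_cons k a i'')) * ?U k i'' i) else 0)"
    by (rule sum.cong[OF refl]) auto
  also have "\<dots> = (\<Sum>i''\<in>multi_idx n k. of_int (T' w i'') * ?U k i'' i)"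
    using a by (simp add: we T' j)
  finally show "(\<Sum>i''\<in>multi_idx n k. of_int (T' w i'') * ?U k i'' i) =
      (\<Sum>w'\<in>multi_idx n (Suc l). ?U (Suc l) w w' * of_int (T' w' i))"
    by simp
qed

lemma intertwiner_rotate_upper_right:
  fixes u :: "nat \<Rightarrow> nat \<Rightarrow> 'a::ring_1"
  assumes h: "intertwiner n u (Suc k) l T"
    and orth: "\<And>a c. a < n \<Longrightarrow> c < n \<Longrightarrow> (\<Sum>b<n. u a b * u c b) = (if a = c then 1 else 0)"
    and T': "\<And>a j i. a < n \<Longrightarrow> j \<in> multi_idx n l \<Longrightarrow> i \<in> multi_idx n k \<Longrightarrow>
      T' (idx_snoc l j a) i = T j (idx_snoc k i a)"
  shows "intertwiner n u k (Suc l) T'"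
  unfolding intertwiner_def
proof (intro ballI)
  fix i w assume i: "i \<in> multi_idx n k" and w: "w \<in> multi_idx n (Suc l)"
  let ?U = "tens_entry u"
  obtain a j where a: "a < n" and j: "j \<in> multi_idx n l" and we: "w = idx_snoc l j a"
    using w by (rule multi_idx_Suc_cases_snoc)
  have "(\<Sum>w'\<in>multi_idx n (Suc l). ?U (Suc l) w w' * of_int (T' w' i))
      = (\<Sum>j'\<in>multi_idx n l. \<Sum>b<n. ?U (Suc l) w (idx_snoc l j' b) * of_int (T' (idx_snoc l j' b) i))"
    by (rule sum_multi_idx_Suc_snoc)
  also have "\<dots> = (\<Sum>j'\<in>multi_idx n l. \<Sum>b<n. (?U l j j' * of_int (T j' (idx_snoc k i b))) * u a b)"
    by (intro sum.cong refl) (simp add: we tens_entry_idx_snoc T' i mult.assoc mult_of_int_commute)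
  also have "\<dots> = (\<Sum>b<n. (\<Sum>j'\<in>multi_idx n l. ?U l j j' * of_int (T j' (idx_snoc k i b))) * u a b)"
    by (simp add: sum_distrib_right sum.swap[of _ "multi_idx n l" "{..<n}"])
  also have "\<dots> = (\<Sum>b<n. (\<Sum>v\<in>multi_idx n (Suc k). of_int (T j v) * ?U (Suc k) v (idx_snoc k i b)) * u a b)"
    using h j i idx_snoc_in_multi_idx unfolding intertwiner_def by (intro sum.cong refl) auto
  also have "\<dots> = (\<Sum>b<n. \<Sum>c<n. \<Sum>i''\<in>multi_idx n k. of_int (T j (idx_snoc k i'' c)) * (?U k i'' i * (u c b * u a b)))"
    by (simp add: sum_multi_idx_Suc_snoc tens_entry_idx_snoc sum_distrib_right mult.assoc
        sum.swap[of _ "multi_idx n k" "{..<n}"])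
  also have "\<dots> = (\<Sum>c<n. \<Sum>b<n. \<Sum>i''\<in>multi_idx n k. of_int (T j (idx_snoc k i'' c)) * (?U k i'' i * (u c b * u a b)))"
    by (rule sum.swap)
  also have "\<dots> = (\<Sum>c<n. \<Sum>i''\<in>multi_idx n k. of_int (T j (idx_snoc k i'' c)) * (?U k i'' i * (\<Sum>b<n. u c b * u a b)))"
    by (simp add: sum_distrib_left sum.swap[of _ "{..<n}" "multi_idx n k"])
  also have "\<dots> = (\<Sum>c<n. \<Sum>i''\<in>multi_idx n k. (if c = a then of_int (T j (idx_snoc k i'' a)) * ?U k i'' i else 0))"
    by (intro sum.cong refl) (auto simp: orth a)
  also have "\<dots> = (\<Sum>c<n. if c = a then (\<Sum>i''\<in>multi_idx n k. of_int (T j (idx_snoc k i'' a)) * ?U k i'' i) else 0)"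
    by (rule sum.cong[OF refl]) auto
  also have "\<dots> = (\<Sum>i''\<in>multi_idx n k. of_int (T' w i'') * ?U k i'' i)"
    using a by (simp add: we T' j)
  finally show "(\<Sum>i''\<in>multi_idx n k. of_int (T' w i'') * ?U k i'' i) =
      (\<Sum>w'\<in>multi_idx n (Suc l). ?U (Suc l) w w' * of_int (T' w' i))"
    by simp
qed

locale selfadjoint_orthogonal =
  fixes n :: nat and u :: "nat \<Rightarrow> nat \<Rightarrow> 'a::unital_cstar_algebra"
  assumes selfadjoint: "\<And>a b. a < n \<Longrightarrow> b < n \<Longrightarrow> cstar (u a b) = u a b"
    and rows_orthonormal: "\<And>a c. a < n \<Longrightarrow> c < n \<Longrightarrow> (\<Sum>b<n. u a b * u c b) = (if a = c then 1 else 0)"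
    and cols_orthonormal: "\<And>a c. a < n \<Longrightarrow> c < n \<Longrightarrow> (\<Sum>b<n. u b a * u b c) = (if a = c then 1 else 0)"
begin

abbreviation "U \<equiv> tens_entry u"

lemma tens_entry_rows_orthonormal:
  "i \<in> multi_idx n k \<Longrightarrow> i' \<in> multi_idx n k \<Longrightarrow>
    (\<Sum>j\<in>multi_idx n k. U k i j * cstar (U k i' j)) = (if i = i' then 1 else 0)"
proof (induction k arbitrary: i i')
  case 0
  then show ?case by (simp add: multi_idx_zero tens_entry_zero)
next
  case (Suc k)
  obtain a i0 where a: "a < n" and i0: "i0 \<in> multi_idx n k" and i: "i = idx_snoc k i0 a"
    using Suc.prems(1) by (rule multi_idx_Suc_cases_snoc)
  obtain a' i0' where a': "a' < n" and i0': "i0' \<in> multi_idx n k" and i': "i' = idx_snoc k i0' a'"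
    using Suc.prems(2) by (rule multi_idx_Suc_cases_snoc)
  have "(\<Sum>j\<in>multi_idx n (Suc k). U (Suc k) i j * cstar (U (Suc k) i' j))
      = (\<Sum>j\<in>multi_idx n k. \<Sum>b<n. (U k i0 j * u a b) * (u a' b * cstar (U k i0' j)))"
    unfolding sum_multi_idx_Suc_snoc i i' tens_entry_idx_snoc
    by (intro sum.cong refl) (simp add: cstar_mult selfadjoint a')
  also have "\<dots> = (\<Sum>j\<in>multi_idx n k. U k i0 j * (\<Sum>b<n. u a b * u a' b) * cstar (U k i0' j))"
    by (simp add: sum_distrib_left sum_distrib_right mult.assoc)
  also have "\<dots> = (if a = a' then (\<Sum>j\<in>multi_idx n k. U k i0 j * cstar (U k i0' j)) else 0)"
    by (simp add: rows_orthonormal a a')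
  also have "\<dots> = (if i = i' then 1 else 0)"
    using Suc.IH[OF i0 i0'] idx_snoc_eq_iff[OF i0 i0' a a'] by (auto simp: i i')
  finally show ?case .
qed

lemma tens_entry_cols_orthonormal:
  "j \<in> multi_idx n k \<Longrightarrow> j' \<in> multi_idx n k \<Longrightarrow>
    (\<Sum>i\<in>multi_idx n k. cstar (U k i j) * U k i j') = (if j = j' then 1 else 0)"
proof (induction k arbitrary: j j')
  case 0
  then show ?case by (simp add: multi_idx_zero tens_entry_zero)
next
  case (Suc k)
  obtain b j0 where b: "b < n" and j0: "j0 \<in> multi_idx n k" and j: "j = idx_snoc k j0 b"
    using Suc.prems(1) by (rule multi_idx_Suc_cases_snoc)
  obtain b' j0' where b': "b' < n" and j0': "j0' \<in> multi_idx n k" and j': "j' = idx_snoc k j0' b'"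
    using Suc.prems(2) by (rule multi_idx_Suc_cases_snoc)
  have "(\<Sum>i\<in>multi_idx n (Suc k). cstar (U (Suc k) i j) * U (Suc k) i j')
      = (\<Sum>i\<in>multi_idx n k. \<Sum>a<n. u a b * (cstar (U k i j0) * U k i j0') * u a b')"
    unfolding sum_multi_idx_Suc_snoc j j' tens_entry_idx_snoc
    by (intro sum.cong refl) (simp add: cstar_mult selfadjoint b mult.assoc)
  also have "\<dots> = (\<Sum>a<n. u a b * (\<Sum>i\<in>multi_idx n k. cstar (U k i j0) * U k i j0') * u a b')"
    by (simp add: sum_distrib_left sum_distrib_right sum.swap[of _ "multi_idx n k" "{..<n}"])
  also have "\<dots> = (if j0 = j0' then (\<Sum>a<n. u a b * u a b') else 0)"
    using Suc.IH[OF j0 j0'] by simp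
  also have "\<dots> = (if j = j' then 1 else 0)"
    using idx_snoc_eq_iff[OF j0 j0' b b'] by (simp add: j j' cols_orthonormal b b')
  finally show ?case .
qed

lemma intertwiner_adjoint_entries:
  assumes T: "intertwiner n u k l T" and d: "d \<in> multi_idx n l" and j: "j \<in> multi_idx n k"
  shows "(\<Sum>b\<in>multi_idx n l. of_int (T b j) * cstar (U l d b)) =
         (\<Sum>c\<in>multi_idx n k. of_int (T d c) * cstar (U k c j))"
proof -
  have "(\<Sum>b\<in>multi_idx n l. of_int (T b j) * cstar (U l d b)) = cstar (\<Sum>b\<in>multi_idx n l. U l d b * of_int (T b j))"
    by (simp add: cstar_sum cstar_mult)
  also have "\<dots> = cstar (\<Sum>c\<in>multi_idx n k. of_int (T d c) * U k c j)"
    using T d j unfolding intertwiner_def by simp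
  also have "\<dots> = (\<Sum>c\<in>multi_idx n k. of_int (T d c) * cstar (U k c j))"
    unfolding cstar_sum cstar_mult cstar_of_int by (rule sum.cong[OF refl]) (rule mult_of_int_commute[symmetric])
  finally show ?thesis .
qed

text \<open>Since u^{\<otimes>k} is unitary, the adjoint of the intertwining relation of T is the
  intertwining relation of the transpose.\<close>

lemma intertwiner_transpose:
  assumes T: "intertwiner n u k l T"
  shows "intertwiner n u l k (\<lambda>i j. T j i)"
  unfolding intertwiner_def
proof (intro ballI)
  fix i j assume i: "i \<in> multi_idx n l" and j: "j \<in> multi_idx n k"
  have "(\<Sum>j'\<in>multi_idx n k. U k j j' * of_int (T i j'))
      = (\<Sum>j'\<in>multi_idx n k. U k j j' * (\<Sum>b\<in>multi_idx n l. of_int (T b j') *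
            (\<Sum>d\<in>multi_idx n l. cstar (U l d b) * U l d i)))"
    using i by (simp add: tens_entry_cols_orthonormal sum_mult_delta finite_multi_idx)
  also have "\<dots> = (\<Sum>d\<in>multi_idx n l. (\<Sum>j'\<in>multi_idx n k. U k j j' *
            (\<Sum>b\<in>multi_idx n l. of_int (T b j') * cstar (U l d b))) * U l d i)"
    by (rule sum_nested_regroup)
  also have "\<dots> = (\<Sum>d\<in>multi_idx n l. (\<Sum>j'\<in>multi_idx n k. U k j j' *
            (\<Sum>c\<in>multi_idx n k. of_int (T d c) * cstar (U k c j'))) * U l d i)"
    by (intro sum.cong refl) (simp add: intertwiner_adjoint_entries[OF T])
  also have "\<dots> = (\<Sum>d\<in>multi_idx n l. (\<Sum>c\<in>multi_idx n k. of_int (T d c) *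
            (\<Sum>j'\<in>multi_idx n k. U k j j' * cstar (U k c j'))) * U l d i)"
    by (intro sum.cong refl arg_cong2[where f="(*)"] sum_of_int_mult_swap)
  also have "\<dots> = (\<Sum>d\<in>multi_idx n l. of_int (T d j) * U l d i)"
    using j by (simp add: tens_entry_rows_orthonormal sum_mult_delta finite_multi_idx)
  finally show "(\<Sum>i'\<in>multi_idx n l. of_int (T i' j) * U l i' i) = (\<Sum>j'\<in>multi_idx n k. U k j j' * of_int (T i j'))"
    by simp
qed

end

definition wf_partition :: "partition \<Rightarrow> bool" where
  "wf_partition p = ((\<forall>x y. rel p x y \<longrightarrow> x \<in> pts (upper p) (lower p) \<and> y \<in> pts (upper p) (lower p)) \<and>
           (\<forall>x y. rel p x y \<longrightarrow> rel p y x))"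

lemma partition_sel[simp]:
  "upper (k, l, R) = k" "lower (k, l, R) = l" "rel (k, l, R) = R"
  by (simp_all add: upper_def lower_def rel_def)

lemma pts_iff: "x \<in> pts k l \<longleftrightarrow> (case x of Inl i \<Rightarrow> i < k | Inr j \<Rightarrow> j < l)"
  by (cases x) (auto simp: pts_def)

lemma pts_Inl[simp]: "Inl i \<in> pts k l \<longleftrightarrow> i < k" and pts_Inr[simp]: "Inr j \<in> pts k l \<longleftrightarrow> j < l"
  by (auto simp: pts_def)

lemma wf_partition_mk_part: "wf_partition (mk_part k l f)"
  by (auto simp: wf_partition_def mk_part_def)

lemma flip_flip[simp]: "flip (flip x) = x"
  by (cases x) auto

lemma flip_pts[simp]: "flip x \<in> pts l k \<longleftrightarrow> x \<in> pts k l"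
  by (cases x) auto

lemma label_flip: "label j i (flip x) = label i j x"
  by (cases x) (auto simp: label_def)

lemma p_inv_sel[simp]: "upper (p_inv p) = lower p" "lower (p_inv p) = upper p" "rel (p_inv p) x y = rel p (flip x) (flip y)"
  by (simp_all add: p_inv_def upper_def lower_def rel_def)

lemma wf_partition_p_inv: "wf_partition p \<Longrightarrow> wf_partition (p_inv p)"
  unfolding wf_partition_def p_inv_sel
  by (metis flip_flip flip_pts)

lemma delta_p_inv: "delta (p_inv p) i j \<longleftrightarrow> delta p j i"
  unfolding delta_def p_inv_sel
  by (metis flip_flip label_flip)

lemma Tp_p_inv: "Tp (p_inv p) = (\<lambda>i j. Tp p j i)"
  by (simp add: fun_eq_iff Tp_def delta_p_inv)

lemma delta_reindex:
  assumes r: "\<And>x y. rel p' x y \<longleftrightarrow> x \<in> P' \<and> y \<in> P' \<and> rel p (g x) (g y)"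
  and s: "\<And>x y. rel p x y \<Longrightarrow> x \<in> g ` P' \<and> y \<in> g ` P'"
  and lab: "\<And>x. x \<in> P' \<Longrightarrow> label i' j' x = label i j (g x)"
  shows "delta p' i' j' \<longleftrightarrow> delta p i j"
proof
  assume d: "delta p' i' j'"
  show "delta p i j" unfolding delta_def
  proof (intro allI impI)
    fix X Y assume XY: "rel p X Y"
    from s[OF XY] obtain x y where x: "x \<in> P'" "X = g x" and y: "y \<in> P'" "Y = g y" by blast
    have "rel p' x y" using r x y XY by simp
    then have "label i' j' x = label i' j' y" using d by (simp add: delta_def)
    then show "label i j X = label i j Y" using lab x y by simp
  qed
next
  assume d: "delta p i j"
  show "delta p' i' j'" unfolding delta_def
  proof (intro allI impI)
    fix x y assume "rel p' x y"
    then have "x \<in> P'" "y \<in> P'" "rel p (g x) (g y)" using r by auto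
    then show "label i' j' x = label i' j' y" using d lab by (simp add: delta_def)
  qed
qed

lemma p_rot_ul_sel[simp]: "upper (p_rot_ul p) = upper p - 1" "lower (p_rot_ul p) = lower p + 1"
  "rel (p_rot_ul p) x y = (x \<in> pts (upper p - 1) (lower p + 1) \<and> y \<in> pts (upper p - 1) (lower p + 1) \<and> rel p (rUL x) (rUL y))"
  by (simp_all add: p_rot_ul_def upper_def lower_def rel_def)

lemma p_rot_ur_sel[simp]: "upper (p_rot_ur p) = upper p - 1" "lower (p_rot_ur p) = lower p + 1"
  "rel (p_rot_ur p) x y = (x \<in> pts (upper p - 1) (lower p + 1) \<and> y \<in> pts (upper p - 1) (lower p + 1) \<and>
      rel p (rUR (upper p) (lower p) x) (rUR (upper p) (lower p) y))"
  by (simp_all add: p_rot_ur_def upper_def lower_def rel_def)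

lemma rUL_pts: "x \<in> pts k (Suc l) \<Longrightarrow> rUL x \<in> pts (Suc k) l"
  by (cases x rule: rUL.cases) auto

lemma rUL_surj: "y \<in> pts (Suc k) l \<Longrightarrow> y \<in> rUL ` pts k (Suc l)"
proof (cases y)
  case (Inl i) assume "y \<in> pts (Suc k) l"
  then show ?thesis
  proof (cases i)
    case 0 then show ?thesis using Inl by (intro image_eqI[where x="Inr 0"]) auto
  next
    case (Suc i') then show ?thesis using Inl \<open>y \<in> pts (Suc k) l\<close> by (intro image_eqI[where x="Inl i'"]) auto
  qed
next
  case (Inr j) assume "y \<in> pts (Suc k) l"
  then show ?thesis using Inr by (intro image_eqI[where x="Inr (Suc j)"]) auto
qed

lemma wf_partition_p_rot_ul: "wf_partition p \<Longrightarrow> 1 \<le> upper p \<Longrightarrow> wf_partition (p_rot_ul p)"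
  unfolding wf_partition_def by auto

lemma delta_p_rot_ul:
  assumes w: "wf_partition p" and k: "upper p = Suc k0" and l: "lower p = l"
  shows "delta (p_rot_ul p) i (idx_cons l a j) \<longleftrightarrow> delta p (idx_cons k0 a i) j"
proof (rule delta_reindex[where P'="pts k0 (Suc l)" and g=rUL])
  show "\<And>x y. rel (p_rot_ul p) x y = (x \<in> pts k0 (Suc l) \<and> y \<in> pts k0 (Suc l) \<and> rel p (rUL x) (rUL y))"
    using k l by simp
  show "\<And>x y. rel p x y \<Longrightarrow> x \<in> rUL ` pts k0 (Suc l) \<and> y \<in> rUL ` pts k0 (Suc l)"
    using w k l rUL_surj unfolding wf_partition_def by metis
  show "\<And>x. x \<in> pts k0 (Suc l) \<Longrightarrow> label i (idx_cons l a j) x = label (idx_cons k0 a i) j (rUL x)"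
  proof -
    fix x assume "x \<in> pts k0 (Suc l)"
    then show "label i (idx_cons l a j) x = label (idx_cons k0 a i) j (rUL x)"
      by (cases x rule: rUL.cases) (auto simp: label_def)
  qed
qed

lemma rUR_surj: "y \<in> pts (Suc k) l \<Longrightarrow> y \<in> rUR (Suc k) l ` pts k (Suc l)"
proof (cases y)
  case (Inl i) assume y: "y \<in> pts (Suc k) l"
  show ?thesis
  proof (cases "i = k")
    case True then show ?thesis using Inl by (intro image_eqI[where x="Inr l"]) auto
  next
    case False then show ?thesis using Inl y by (intro image_eqI[where x="Inl i"]) auto
  qed
next
  case (Inr j) assume "y \<in> pts (Suc k) l"
  then show ?thesis using Inr by (intro image_eqI[where x="Inr j"]) auto
qed

lemma wf_partition_p_rot_ur: "wf_partition p \<Longrightarrow> 1 \<le> upper p \<Longrightarrow> wf_partition (p_rot_ur p)"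
  unfolding wf_partition_def by auto

lemma delta_p_rot_ur:
  assumes w: "wf_partition p" and k: "upper p = Suc k0" and l: "lower p = l"
  shows "delta (p_rot_ur p) i (idx_snoc l j a) \<longleftrightarrow> delta p (idx_snoc k0 i a) j"
proof (rule delta_reindex[where P'="pts k0 (Suc l)" and g="rUR (Suc k0) l"])
  show "\<And>x y. rel (p_rot_ur p) x y = (x \<in> pts k0 (Suc l) \<and> y \<in> pts k0 (Suc l) \<and> rel p (rUR (Suc k0) l x) (rUR (Suc k0) l y))"
    using k l by simp
  show "\<And>x y. rel p x y \<Longrightarrow> x \<in> rUR (Suc k0) l ` pts k0 (Suc l) \<and> y \<in> rUR (Suc k0) l ` pts k0 (Suc l)"
    using w k l rUR_surj unfolding wf_partition_def by metis
  show "\<And>x. x \<in> pts k0 (Suc l) \<Longrightarrow> label i (idx_snoc l j a) x = label (idx_snoc k0 i a) j (rUR (Suc k0) l x)"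
  proof -
    fix x assume "x \<in> pts k0 (Suc l)"
    then show "label i (idx_snoc l j a) x = label (idx_snoc k0 i a) j (rUR (Suc k0) l x)"
      by (cases x) (auto simp: label_def)
  qed
qed

lemma p_rot_ll_eq: "p_rot_ll p = p_inv (p_rot_ul (p_inv p))"
proof -
  have f: "\<And>x. flip (rUL (flip x)) = rLL x"
    subgoal for x by (cases x rule: rLL.cases) auto
    done
  show ?thesis
    unfolding p_rot_ll_def p_inv_def[of "p_rot_ul (p_inv p)"]
    by (simp add: f fun_eq_iff)
qed

lemma p_rot_lr_eq: "p_rot_lr p = p_inv (p_rot_ur (p_inv p))"
proof -
  have f: "\<And>x. flip (rUR (lower p) (upper p) (flip x)) = rLR (upper p) (lower p) x"
    by (case_tac x) auto
  show ?thesis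
    unfolding p_rot_lr_def p_inv_def[of "p_rot_ur (p_inv p)"]
    by (simp add: f fun_eq_iff)
qed

lemma p_tensor_sel[simp]: "upper (p_tensor p q) = upper p + upper q" "lower (p_tensor p q) = lower p + lower q"
  "rel (p_tensor p q) x y = (rel p x y \<or> (\<exists>x' y'. x = shift (upper p) (lower p) x' \<and> y = shift (upper p) (lower p) y' \<and> rel q x' y'))"
  by (simp_all add: p_tensor_def upper_def lower_def rel_def)

lemma shift_pts: "shift k l x \<in> pts (k + k') (l + l') \<longleftrightarrow> x \<in> pts k' l'"
  by (cases x) auto

lemma wf_partition_p_tensor: "wf_partition p \<Longrightarrow> wf_partition q \<Longrightarrow> wf_partition (p_tensor p q)"
proof -
  assume wp: "wf_partition p" and wq: "wf_partition q"
  have pm: "\<And>x. x \<in> pts (upper p) (lower p) \<Longrightarrow> x \<in> pts (upper p + upper q) (lower p + lower q)"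
    subgoal for x by (cases x) auto done
  show ?thesis using wp wq unfolding wf_partition_def p_tensor_sel
    by (metis pm shift_pts)
qed

lemma label_idx_append_left: "x \<in> pts k l \<Longrightarrow> label (idx_append k i1 k' i2) (idx_append l j1 l' j2) x = label i1 j1 x"
  by (cases x) (auto simp: label_def idx_append_def)

lemma label_idx_append_right: "x \<in> pts k' l' \<Longrightarrow> label (idx_append k i1 k' i2) (idx_append l j1 l' j2) (shift k l x) = label i2 j2 x"
  by (cases x) (auto simp: label_def idx_append_def)

lemma delta_p_tensor:
  assumes wp: "wf_partition p" and wq: "wf_partition q"
  shows "delta (p_tensor p q) (idx_append (upper p) i1 (upper q) i2) (idx_append (lower p) j1 (lower q) j2)
     \<longleftrightarrow> delta p i1 j1 \<and> delta q i2 j2"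
proof -
  let ?l = "label (idx_append (upper p) i1 (upper q) i2) (idx_append (lower p) j1 (lower q) j2)"
  have left: "?l x = label i1 j1 x" "?l y = label i1 j1 y" if "rel p x y" for x y
    using that wp by (auto simp: wf_partition_def label_idx_append_left)
  have right: "?l (shift (upper p) (lower p) x) = label i2 j2 x"
    "?l (shift (upper p) (lower p) y) = label i2 j2 y" if "rel q x y" for x y
    using that wq by (auto simp: wf_partition_def label_idx_append_right)
  show ?thesis
    unfolding delta_def p_tensor_sel
  proof (intro iffI conjI allI impI)
    fix x y assume "\<forall>x y. rel p x y \<or> (\<exists>x' y'. x = shift (upper p) (lower p) x' \<and>
      y = shift (upper p) (lower p) y' \<and> rel q x' y') \<longrightarrow> ?l x = ?l y"
    then show "rel p x y \<Longrightarrow> label i1 j1 x = label i1 j1 y"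
      and "rel q x y \<Longrightarrow> label i2 j2 x = label i2 j2 y"
      using left right by metis+
  qed (use left right in auto)
qed

subsection \<open>Composition of partitions\<close>

definition comp_edge :: "partition \<Rightarrow> partition \<Rightarrow> nat \<times> nat \<Rightarrow> nat \<times> nat \<Rightarrow> bool" where
  "comp_edge p q = (\<lambda>a b. (\<exists>x y. rel p x y \<and> a = embP x \<and> b = embP y) \<or>
                         (\<exists>x y. rel q x y \<and> a = embQ x \<and> b = embQ y))"

lemma p_comp_sel [simp]: "upper (p_comp q p) = upper p" "lower (p_comp q p) = lower q"
  "rel (p_comp q p) x y \<longleftrightarrow> x \<in> pts (upper p) (lower q) \<and> y \<in> pts (upper p) (lower q) \<and>
     (comp_edge p q)\<^sup>*\<^sup>* (embO x) (embO y)"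
  by (simp_all add: p_comp_def comp_edge_def upper_def lower_def rel_def)

definition stack_label :: "(nat \<Rightarrow> nat) \<Rightarrow> (nat \<Rightarrow> nat) \<Rightarrow> (nat \<Rightarrow> nat) \<Rightarrow> nat \<times> nat \<Rightarrow> nat" where
  "stack_label i v j a = (if fst a = 0 then i (snd a) else if fst a = 1 then v (snd a) else j (snd a))"

lemma stack_label_emb [simp]:
  "stack_label i v j (embP x) = label i v x"
  "stack_label i v j (embQ x) = label v j x"
  "stack_label i v j (embO x) = label i j x"
  by (cases x; simp add: stack_label_def label_def)+

lemma delta_delta_iff_comp_edge:
  "delta p i v \<and> delta q v j \<longleftrightarrow> (\<forall>a b. comp_edge p q a b \<longrightarrow> stack_label i v j a = stack_label i v j b)"
proof
  assume "delta p i v \<and> delta q v j"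
  then show "\<forall>a b. comp_edge p q a b \<longrightarrow> stack_label i v j a = stack_label i v j b"
    unfolding delta_def comp_edge_def by auto
next
  assume edges: "\<forall>a b. comp_edge p q a b \<longrightarrow> stack_label i v j a = stack_label i v j b"
  have "label i v x = label i v y" if "rel p x y" for x y
    using edges[rule_format, of "embP x" "embP y"] that by (auto simp: comp_edge_def)
  moreover have "label v j x = label v j y" if "rel q x y" for x y
    using edges[rule_format, of "embQ x" "embQ y"] that by (auto simp: comp_edge_def)
  ultimately show "delta p i v \<and> delta q v j"
    unfolding delta_def by blast
qed

lemma rtranclp_invariant:
  assumes "\<And>a b. E a b \<Longrightarrow> f a = f b" and "E\<^sup>*\<^sup>* a b"
  shows "f a = f b"
  using assms(2) by (induction rule: rtranclp_induct) (auto dest: assms(1))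

lemma delta_p_comp_of_delta:
  assumes "delta p i v" "delta q v j"
  shows "delta (p_comp q p) i j"
  unfolding delta_def
proof (intro allI impI)
  fix x y assume "rel (p_comp q p) x y"
  then have "(comp_edge p q)\<^sup>*\<^sup>* (embO x) (embO y)" by simp
  then have "stack_label i v j (embO x) = stack_label i v j (embO y)"
    by (rule rtranclp_invariant[rotated]) (use assms delta_delta_iff_comp_edge in blast)
  then show "label i j x = label i j y" by simp
qed

definition middle_labels :: "nat \<Rightarrow> partition \<Rightarrow> partition \<Rightarrow> (nat \<Rightarrow> nat) \<Rightarrow> (nat \<Rightarrow> nat) \<Rightarrow> (nat \<Rightarrow> nat) set" where
  "middle_labels n p q i j = {v \<in> multi_idx n (lower p). delta p i v \<and> delta q v j}"

lemma finite_middle_labels: "finite (middle_labels n p q i j)"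
  by (simp add: middle_labels_def finite_multi_idx)

lemma sum_Tp_Tp_eq_card:
  "(\<Sum>v\<in>multi_idx n (lower p). Tp q j v * Tp p v i) = int (card (middle_labels n p q i j))"
proof -
  have "(\<Sum>v\<in>multi_idx n (lower p). Tp q j v * Tp p v i) =
      (\<Sum>v\<in>multi_idx n (lower p). if delta p i v \<and> delta q v j then 1 else 0)"
    by (intro sum.cong refl) (simp add: Tp_def)
  then show ?thesis
    by (simp add: middle_labels_def finite_multi_idx sum.If_cases Int_def)
qed

locale composable_partitions =
  fixes p q :: partition
  assumes wf_p: "wf_partition p" and wf_q: "wf_partition q" and lower_p: "lower p = upper q"
begin

abbreviation "E \<equiv> comp_edge p q"
abbreviation "outer \<equiv> pts (upper p) (lower q)"

lemma comp_edge_sym: "E a b \<Longrightarrow> E b a"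
  using wf_p wf_q unfolding wf_partition_def comp_edge_def by blast

lemma comp_edge_rtranclp_sym: "E\<^sup>*\<^sup>* a b \<Longrightarrow> E\<^sup>*\<^sup>* b a"
  using sympD[OF symp_rtranclp] comp_edge_sym by (metis sympI)

lemma wf_partition_p_comp: "wf_partition (p_comp q p)"
  unfolding wf_partition_def by (auto intro: comp_edge_rtranclp_sym)

lemma comp_edge_cases:
  assumes "E a b"
  obtains (outer) x where "x \<in> outer" "a = embO x" | (middle) r where "a = (1, r)" "r < lower p"
proof -
  from assms obtain x y where "rel p x y \<and> a = embP x \<or> rel q x y \<and> a = embQ x"
    unfolding comp_edge_def by blast
  then have x: "x \<in> pts (upper p) (lower p) \<and> a = embP x \<or> x \<in> pts (upper q) (lower q) \<and> a = embQ x"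
    using wf_p wf_q unfolding wf_partition_def by blast
  then show thesis
  proof (elim disjE conjE)
    assume "x \<in> pts (upper p) (lower p)" "a = embP x"
    then show thesis using that(1)[of x] that(2)[of "snd a"] by (cases x) auto
  next
    assume "x \<in> pts (upper q) (lower q)" "a = embQ x"
    then show thesis using that(1)[of x] that(2)[of "snd a"] lower_p by (cases x) auto
  qed
qed

definition outer_connected :: "nat \<times> nat \<Rightarrow> bool" where
  "outer_connected a \<longleftrightarrow> (\<exists>x\<in>outer. E\<^sup>*\<^sup>* a (embO x))"

lemma outer_connected_edge: "E a b \<Longrightarrow> outer_connected a \<longleftrightarrow> outer_connected b"
  unfolding outer_connected_def by (metis comp_edge_sym converse_rtranclp_into_rtranclp)

text \<open>Fixing an admissible pair (i0, j0), every point connected to the outer rows inherits the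
  label of such an outer point; by admissibility it does not matter which one.\<close>

definition outer_label :: "(nat \<Rightarrow> nat) \<Rightarrow> (nat \<Rightarrow> nat) \<Rightarrow> nat \<times> nat \<Rightarrow> nat" where
  "outer_label i0 j0 a = label i0 j0 (SOME x. x \<in> outer \<and> E\<^sup>*\<^sup>* a (embO x))"

lemma outer_label_eq:
  assumes d0: "delta (p_comp q p) i0 j0" and "x \<in> outer" "E\<^sup>*\<^sup>* a (embO x)"
  shows "outer_label i0 j0 a = label i0 j0 x"
proof -
  define y where "y = (SOME x. x \<in> outer \<and> E\<^sup>*\<^sup>* a (embO x))"
  have y: "y \<in> outer" "E\<^sup>*\<^sup>* a (embO y)"
    using someI[of "\<lambda>x. x \<in> outer \<and> E\<^sup>*\<^sup>* a (embO x)"] assms(2,3) by (auto simp: y_def)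
  then have "rel (p_comp q p) y x"
    using assms(2,3) by (auto intro: rtranclp_trans comp_edge_rtranclp_sym)
  then show ?thesis
    using d0 by (simp add: outer_label_def y_def[symmetric] delta_def)
qed

lemma outer_label_edge:
  assumes d0: "delta (p_comp q p) i0 j0" and "E a b" "outer_connected a"
  shows "outer_label i0 j0 a = outer_label i0 j0 b"
proof -
  obtain x where "x \<in> outer" "E\<^sup>*\<^sup>* a (embO x)"
    using assms(3) unfolding outer_connected_def by blast
  moreover have "E\<^sup>*\<^sup>* b (embO x)"
    using comp_edge_sym[OF assms(2)] \<open>E\<^sup>*\<^sup>* a (embO x)\<close> by (rule converse_rtranclp_into_rtranclp)
  ultimately show ?thesis
    using outer_label_eq[OF d0] by metis
qed

lemma stack_label_outer_connected:
  assumes "v \<in> middle_labels n p q i j" "x \<in> outer" "E\<^sup>*\<^sup>* a (embO x)"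
  shows "stack_label i v j a = label i j x"
proof -
  have "delta p i v \<and> delta q v j" using assms(1) by (simp add: middle_labels_def)
  then have "\<forall>a b. E a b \<longrightarrow> stack_label i v j a = stack_label i v j b"
    by (simp only: delta_delta_iff_comp_edge)
  then show ?thesis
    using rtranclp_invariant[of E "stack_label i v j", OF _ assms(3)] by (metis stack_label_emb(3))
qed

lemma comp_edge_not_outer_connected:
  assumes "E a b" "\<not> outer_connected a"
  obtains r where "a = (1, r)" "r < lower p"
  using assms(1) by (cases rule: comp_edge_cases) (use assms(2) that in \<open>auto simp: outer_connected_def\<close>)

definition relabel_middle :: "(nat \<Rightarrow> nat) \<Rightarrow> (nat \<Rightarrow> nat) \<Rightarrow> (nat \<Rightarrow> nat) \<Rightarrow> nat \<Rightarrow> nat" where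
  "relabel_middle i0 j0 v = (\<lambda>r. if r < lower p then
     (if outer_connected (1, r) then outer_label i0 j0 (1, r) else v r) else undefined)"

lemma relabel_middle_inj: "inj_on (relabel_middle i0 j0) (middle_labels n p q i j)"
proof (rule inj_onI, rule ext)
  fix v w r assume v: "v \<in> middle_labels n p q i j" and w: "w \<in> middle_labels n p q i j"
    and e: "relabel_middle i0 j0 v = relabel_middle i0 j0 w"
  consider "r \<ge> lower p" | "r < lower p" "outer_connected (1, r)" | "r < lower p" "\<not> outer_connected (1, r)"
    by linarith
  then show "v r = w r"
  proof cases
    case 1
    then show ?thesis using v w by (simp add: middle_labels_def multi_idx_iff)
  next
    case 2
    then obtain x where "x \<in> outer" "E\<^sup>*\<^sup>* (1, r) (embO x)" unfolding outer_connected_def by blast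
    then show ?thesis
      using stack_label_outer_connected[OF v] stack_label_outer_connected[OF w]
      by (fastforce simp: stack_label_def)
  next
    case 3
    then show ?thesis using fun_cong[OF e, of r] by (simp add: relabel_middle_def)
  qed
qed

lemma relabel_middle_in_multi_idx:
  assumes d0: "delta (p_comp q p) i0 j0" and i0: "i0 \<in> multi_idx n (upper p)" and j0: "j0 \<in> multi_idx n (lower q)"
    and v: "v \<in> multi_idx n (lower p)"
  shows "relabel_middle i0 j0 v \<in> multi_idx n (lower p)"
  unfolding multi_idx_iff
proof (intro conjI allI impI)
  fix r assume r: "r < lower p"
  show "relabel_middle i0 j0 v r < n"
  proof (cases "outer_connected (1, r)")
    case True
    then obtain x where x: "x \<in> outer" "E\<^sup>*\<^sup>* (1, r) (embO x)" unfolding outer_connected_def by blast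
    then have "relabel_middle i0 j0 v r = label i0 j0 x"
      using True r outer_label_eq[OF d0] by (simp add: relabel_middle_def)
    moreover have "label i0 j0 x < n"
      using x(1) i0 j0 by (cases x) (auto simp: label_def multi_idx_iff)
    ultimately show ?thesis by simp
  next
    case False
    then show ?thesis using r v by (simp add: relabel_middle_def multi_idx_iff)
  qed
qed (simp add: relabel_middle_def)

lemma stack_label_relabel_middle:
  assumes d0: "delta (p_comp q p) i0 j0" and "E a b" and "outer_connected a"
  shows "stack_label i0 (relabel_middle i0 j0 v) j0 a = outer_label i0 j0 a"
  using assms(2)
proof (cases rule: comp_edge_cases)
  case (outer x)
  then show ?thesis
    using outer_label_eq[OF d0 outer(1)] by simp
next
  case (middle r)
  then show ?thesis
    using assms(3) by (simp add: stack_label_def relabel_middle_def)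
qed

lemma relabel_middle_in_middle_labels:
  assumes d0: "delta (p_comp q p) i0 j0" and i0: "i0 \<in> multi_idx n (upper p)" and j0: "j0 \<in> multi_idx n (lower q)"
    and v: "v \<in> middle_labels n p q i j"
  shows "relabel_middle i0 j0 v \<in> middle_labels n p q i0 j0"
proof -
  let ?w = "relabel_middle i0 j0 v"
  have "stack_label i0 ?w j0 a = stack_label i0 ?w j0 b" if ab: "E a b" for a b
  proof (cases "outer_connected a")
    case True
    then show ?thesis
      using stack_label_relabel_middle[OF d0 ab] stack_label_relabel_middle[OF d0 comp_edge_sym[OF ab]]
        outer_label_edge[OF d0 ab] outer_connected_edge[OF ab] by simp
  next
    case False
    then have "\<not> outer_connected b" using outer_connected_edge[OF ab] by simp
    have "stack_label i v j a = stack_label i v j b"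
      using v ab unfolding middle_labels_def delta_delta_iff_comp_edge by blast
    moreover have unchanged: "stack_label i0 ?w j0 c = stack_label i v j c"
      if "E c d" "\<not> outer_connected c" for c d
      using that by (elim comp_edge_not_outer_connected) (auto simp: stack_label_def relabel_middle_def)
    ultimately show ?thesis
      using unchanged[OF ab False] unchanged[OF comp_edge_sym[OF ab] \<open>\<not> outer_connected b\<close>] by simp
  qed
  then have "delta p i0 ?w \<and> delta q ?w j0"
    by (simp only: delta_delta_iff_comp_edge) blast
  then show ?thesis
    using relabel_middle_in_multi_idx[OF d0 i0 j0] v by (simp add: middle_labels_def)
qed

lemma card_middle_labels_le:
  assumes "delta (p_comp q p) i0 j0" "i0 \<in> multi_idx n (upper p)" "j0 \<in> multi_idx n (lower q)"
  shows "card (middle_labels n p q i j) \<le> card (middle_labels n p q i0 j0)"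
  using card_inj_on_le[OF relabel_middle_inj _ finite_middle_labels]
    relabel_middle_in_middle_labels[OF assms] by blast

end

definition idx_zero :: "nat \<Rightarrow> nat \<Rightarrow> nat" where
  "idx_zero k = (\<lambda>r. if r < k then 0 else undefined)"

lemma idx_zero_in_multi_idx: "0 < n \<Longrightarrow> idx_zero k \<in> multi_idx n k"
  by (simp add: multi_idx_iff idx_zero_def)

lemma delta_idx_zero: "wf_partition p \<Longrightarrow> delta p (idx_zero (upper p)) (idx_zero (lower p))"
proof -
  have "label (idx_zero k) (idx_zero l) x = 0" if "x \<in> pts k l" for k l x
    using that by (cases x) (auto simp: label_def idx_zero_def)
  then show "wf_partition p \<Longrightarrow> ?thesis"
    unfolding delta_def wf_partition_def by metis
qed

context composable_partitions
begin

text \<open>Every admissible pair of outer labels admits the same number c of middle labellings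
  (c counts the labellings of the closed loops), and c > 0 because constant labels are admissible.\<close>

lemma card_middle_labels_eq:
  assumes n: "0 < n" and i: "i \<in> multi_idx n (upper p)" and j: "j \<in> multi_idx n (lower q)"
  defines "c \<equiv> card (middle_labels n p q (idx_zero (upper p)) (idx_zero (lower q)))"
  shows "card (middle_labels n p q i j) = (if delta (p_comp q p) i j then c else 0)"
proof (cases "delta (p_comp q p) i j")
  case True
  have "delta (p_comp q p) (idx_zero (upper p)) (idx_zero (lower q))"
    using delta_idx_zero[OF wf_partition_p_comp] by simp
  then have "card (middle_labels n p q i j) \<le> c"
    unfolding c_def by (rule card_middle_labels_le) (simp_all add: idx_zero_in_multi_idx n)
  moreover have "c \<le> card (middle_labels n p q i j)"
    unfolding c_def using True i j by (rule card_middle_labels_le)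
  ultimately show ?thesis using True by simp
next
  case False
  then have "middle_labels n p q i j = {}"
    unfolding middle_labels_def using delta_p_comp_of_delta by blast
  then show ?thesis using False by simp
qed

lemma card_middle_labels_zero_pos:
  "0 < n \<Longrightarrow> card (middle_labels n p q (idx_zero (upper p)) (idx_zero (lower q))) \<noteq> 0"
proof -
  assume "0 < n"
  then have "idx_zero (lower p) \<in> middle_labels n p q (idx_zero (upper p)) (idx_zero (lower q))"
    using delta_idx_zero[OF wf_p] delta_idx_zero[OF wf_q] lower_p
    by (simp add: middle_labels_def idx_zero_in_multi_idx)
  then show ?thesis
    using finite_middle_labels by (auto simp: card_eq_0_iff)
qed

lemma intertwiner_Tp_p_comp:
  fixes u :: "nat \<Rightarrow> nat \<Rightarrow> 'a::real_algebra_1"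
  assumes n: "0 < n" and Tp: "intertwiner n u (upper p) (lower p) (Tp p)"
    and Tq: "intertwiner n u (upper q) (lower q) (Tp q)"
  shows "intertwiner n u (upper p) (lower q) (Tp (p_comp q p))"
proof -
  define c where "c = card (middle_labels n p q (idx_zero (upper p)) (idx_zero (lower q)))"
  have "intertwiner n u (upper p) (lower q) (\<lambda>j i. \<Sum>v\<in>multi_idx n (lower p). Tp q j v * Tp p v i)"
    using intertwiner_comp[OF Tp Tq[folded lower_p]] .
  also have "?this \<longleftrightarrow> intertwiner n u (upper p) (lower q) (\<lambda>j i. int c * Tp (p_comp q p) j i)"
    by (intro intertwiner_cong, subst sum_Tp_Tp_eq_card)
      (simp add: card_middle_labels_eq[OF n] c_def Tp_def)
  finally show ?thesis
    by (rule intertwiner_cancel_scalar[rotated]) (use card_middle_labels_zero_pos[OF n] in \<open>simp add: c_def\<close>)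
qed

end

lemma mk_part_sel [simp]: "upper (mk_part k l f) = k" "lower (mk_part k l f) = l"
  by (simp_all add: mk_part_def)

lemma delta_mk_part:
  "delta (mk_part k l f) i j \<longleftrightarrow> (\<forall>x\<in>pts k l. \<forall>y\<in>pts k l. f x = f y \<longrightarrow> label i j x = label i j y)"
  by (auto simp: delta_def mk_part_def)

lemma p_pair_eq: "p_pair = p_rot_ul p_id"
proof -
  have "\<And>x. x \<in> pts 0 2 \<Longrightarrow> rUL x \<in> pts 1 1"
    using rUL_pts[of _ 0 1] by (simp add: numeral_2_eq_2)
  then show ?thesis
    unfolding p_pair_def p_rot_ul_def p_id_def mk_part_def
    by (auto simp: fun_eq_iff upper_def lower_def rel_def numeral_2_eq_2)
qed

lemma p_id_sel [simp]: "upper p_id = 1" "lower p_id = 1"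
  by (simp_all add: p_id_def)

lemma wf_partition_p_id: "wf_partition p_id"
  unfolding p_id_def by (rule wf_partition_mk_part)

lemma delta_p_id: "delta p_id (idx_single a) (idx_single b) \<longleftrightarrow> a = b"
proof -
  have "pts 1 1 = {Inl 0, Inr 0}"
    by (auto simp: pts_def)
  then show ?thesis
    unfolding p_id_def delta_mk_part by (auto simp: label_def idx_single_def)
qed

lemma Tp_p_id: "Tp p_id (idx_single b) (idx_single a) = (if a = b then 1 else 0)"
  by (simp add: Tp_def delta_p_id)

context selfadjoint_orthogonal
begin

lemma intertwiner_p_id: "intertwiner n u 1 1 (Tp p_id)"
  unfolding intertwiner_def One_nat_def sum_multi_idx_one
  by (auto simp: multi_idx_one Tp_p_id sum_mult_delta if_distrib[of of_int] if_distrib[of "\<lambda>x. x * _"]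
      cong: if_cong)

lemma intertwiner_p_rot_ul:
  assumes wf: "wf_partition p" and "1 \<le> upper p" and T: "intertwiner n u (upper p) (lower p) (Tp p)"
  shows "intertwiner n u (upper (p_rot_ul p)) (lower (p_rot_ul p)) (Tp (p_rot_ul p))"
proof -
  obtain k where k: "upper p = Suc k" using \<open>1 \<le> upper p\<close> by (cases "upper p") auto
  have "intertwiner n u k (Suc (lower p)) (Tp (p_rot_ul p))"
  proof (rule intertwiner_rotate_upper_left[OF T[unfolded k] rows_orthonormal])
    fix a j i
    show "Tp (p_rot_ul p) (idx_cons (lower p) a j) i = Tp p j (idx_cons k a i)"
      by (simp only: Tp_def delta_p_rot_ul[OF wf k refl])
  qed
  then show ?thesis using k by simp
qed

lemma intertwiner_p_rot_ur:
  assumes wf: "wf_partition p" and "1 \<le> upper p" and T: "intertwiner n u (upper p) (lower p) (Tp p)"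
  shows "intertwiner n u (upper (p_rot_ur p)) (lower (p_rot_ur p)) (Tp (p_rot_ur p))"
proof -
  obtain k where k: "upper p = Suc k" using \<open>1 \<le> upper p\<close> by (cases "upper p") auto
  have "intertwiner n u k (Suc (lower p)) (Tp (p_rot_ur p))"
  proof (rule intertwiner_rotate_upper_right[OF T[unfolded k] rows_orthonormal])
    fix a j i
    show "Tp (p_rot_ur p) (idx_snoc (lower p) j a) i = Tp p j (idx_snoc k i a)"
      by (simp only: Tp_def delta_p_rot_ur[OF wf k refl])
  qed
  then show ?thesis using k by simp
qed

lemma intertwiner_p_inv:
  "intertwiner n u (upper p) (lower p) (Tp p) \<Longrightarrow> intertwiner n u (upper (p_inv p)) (lower (p_inv p)) (Tp (p_inv p))"
  unfolding Tp_p_inv p_inv_sel by (rule intertwiner_transpose)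

lemma intertwiner_p_tensor:
  assumes "wf_partition p" "wf_partition q"
    and "intertwiner n u (upper p) (lower p) (Tp p)" "intertwiner n u (upper q) (lower q) (Tp q)"
  shows "intertwiner n u (upper (p_tensor p q)) (lower (p_tensor p q)) (Tp (p_tensor p q))"
  unfolding p_tensor_sel
  by (rule intertwiner_tensor[OF assms(3,4)]) (simp add: Tp_def delta_p_tensor[OF assms(1,2)])

lemma gen_cat_intertwiner:
  assumes n: "0 < n" and wf: "wf_partition g" and T: "intertwiner n u (upper g) (lower g) (Tp g)"
  shows "p \<in> gen_cat g \<Longrightarrow> wf_partition p \<and> intertwiner n u (upper p) (lower p) (Tp p)"
proof (induction rule: gen_cat.induct)
  case gen
  then show ?case using wf T by simp
next
  case pair
  have "intertwiner n u (upper p_pair) (lower p_pair) (Tp p_pair)"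
    unfolding p_pair_eq
    by (rule intertwiner_p_rot_ul[OF wf_partition_p_id]) (simp_all add: intertwiner_p_id[unfolded One_nat_def])
  then show ?case by (simp add: p_pair_def wf_partition_mk_part)
next
  case ident
  then show ?case using intertwiner_p_id wf_partition_p_id by simp
next
  case (tensor a b)
  then show ?case using intertwiner_p_tensor wf_partition_p_tensor by blast
next
  case (comp a b)
  then interpret composable_partitions a b by unfold_locales auto
  show ?case using comp intertwiner_Tp_p_comp[OF n] wf_partition_p_comp by auto
next
  case (inv a)
  then show ?case using intertwiner_p_inv wf_partition_p_inv by blast
next
  case (rot_ul a)
  then show ?case using intertwiner_p_rot_ul wf_partition_p_rot_ul by blast
next
  case (rot_ur a)
  then show ?case using intertwiner_p_rot_ur wf_partition_p_rot_ur by blast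
next
  case (rot_ll a)
  then show ?case unfolding p_rot_ll_eq
    by (metis intertwiner_p_inv intertwiner_p_rot_ul p_inv_sel(1) wf_partition_p_inv wf_partition_p_rot_ul)
next
  case (rot_lr a)
  then show ?case unfolding p_rot_lr_eq
    by (metis intertwiner_p_inv intertwiner_p_rot_ur p_inv_sel(1) wf_partition_p_inv wf_partition_p_rot_ur)
qed

end

subsection \<open>Local symmetries\<close>

lemma cstar_mult_self_eq_zero: "cstar x * x = 0 \<Longrightarrow> (x :: 'a::unital_cstar_algebra) = 0"
  using cstar_identity[of x] by simp

text \<open>The C*-identity forces y = x^3 - x to vanish, because y is self-adjoint with y^2 = 0.\<close>

lemma local_symmetry_cube:
  fixes x :: "'a::unital_cstar_algebra"
  assumes "local_symmetry x"
  shows "x * x * x = x"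
proof -
  have sa: "cstar x = x" and x4: "x * x * x * x = x * x"
    using assms by (auto simp: local_symmetry_def is_projection_def mult.assoc)
  define y where "y = x * x * x - x"
  have "cstar y = y"
    by (simp add: y_def cstar_diff cstar_mult sa mult.assoc)
  moreover have "y * y = 0"
    by (simp add: y_def algebra_simps x4 flip: mult.assoc)
  ultimately have "y = 0"
    by (metis cstar_mult_self_eq_zero)
  then show ?thesis by (simp add: y_def)
qed

lemma local_symmetry_mult_eq_zero:
  fixes x y :: "'a::unital_cstar_algebra"
  assumes "local_symmetry x" "local_symmetry y" "(x * x) * (y * y) = 0"
  shows "x * y = 0"
proof -
  have "x * y = (x * x * x) * (y * y * y)"
    using assms(1,2) by (simp add: local_symmetry_cube)
  also have "\<dots> = x * ((x * x) * (y * y)) * y"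
    by (simp add: mult.assoc)
  finally show ?thesis using assms(3) by simp
qed

lemma commuting_idempotents_mult_one_minus:
  fixes e f h :: "'a::ring_1"
  assumes "e * e = e" "f * f = f" "h * h = h" "e * f = f * e" "h * f = f * h" "e * h = h * e"
  shows "(e * (1 - f)) * (e * (1 - f)) = e * (1 - f)"
    and "(e * (1 - f)) * (h * (1 - f)) = (h * (1 - f)) * (e * (1 - f))"
  using assms by (simp_all add: algebra_simps) (metis mult.assoc)+

text \<open>Multiplying by 1 - f k removes the summand f k, so induction on the number of summands
  shows that any two of the idempotents agree; then their sum is a nonzero multiple of each.\<close>

lemma commuting_idempotents_sum_eq_zero:
  fixes f :: "'b \<Rightarrow> 'a::real_algebra_1"
  assumes "finite S" "\<forall>j\<in>S. f j * f j = f j" "\<forall>j\<in>S. \<forall>k\<in>S. f j * f k = f k * f j" "sum f S = 0"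
  shows "\<forall>j\<in>S. f j = 0"
  using assms
proof (induction "card S" arbitrary: S f rule: less_induct)
  case less
  note idem = less.prems(2) and comm = less.prems(3)
  have absorb: "f j = f j * f k" if j: "j \<in> S" and k: "k \<in> S" and "j \<noteq> k" for j k
  proof -
    define g where "g x = f x * (1 - f k)" for x
    have g_idem: "\<forall>x\<in>S - {k}. g x * g x = g x"
      using commuting_idempotents_mult_one_minus(1)[of _ "f k" "f k"] idem comm k
      unfolding g_def by blast
    have g_comm: "\<forall>x\<in>S - {k}. \<forall>y\<in>S - {k}. g x * g y = g y * g x"
      using commuting_idempotents_mult_one_minus(2)[of _ "f k"] idem comm k
      unfolding g_def by blast
    have "sum f (S - {k}) = - f k"
      using less.prems(4) sum.remove[OF less.prems(1) k, of f] by (simp add: add_eq_0_iff)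
    then have "sum g (S - {k}) = - f k * (1 - f k)"
      by (simp add: g_def sum_distrib_right[symmetric])
    also have "\<dots> = 0"
      using idem k by (simp add: right_diff_distrib)
    finally have "\<forall>x\<in>S - {k}. g x = 0"
      using less.hyps[OF card_Diff1_less[OF less.prems(1) k] _ g_idem g_comm] less.prems(1) by blast
    then show ?thesis
      using j \<open>j \<noteq> k\<close> by (simp add: g_def right_diff_distrib)
  qed
  show ?case
  proof
    fix j assume j: "j \<in> S"
    have "f k = f j" if "k \<in> S" for k
      using absorb[OF that j] absorb[OF j that] comm j that by (cases "k = j") auto
    then have "sum f S = real (card S) *\<^sub>R f j"
      by (simp add: scaleR_conv_of_real)
    then show "f j = 0"
      using less.prems(1,4) j by auto
  qed
qed

lemma commuting_idempotents_sum_one_orthogonal: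
  fixes P :: "'b \<Rightarrow> 'a::real_algebra_1"
  assumes "finite A" and idem: "\<And>m. m \<in> A \<Longrightarrow> P m * P m = P m"
    and comm: "\<And>m m'. m \<in> A \<Longrightarrow> m' \<in> A \<Longrightarrow> P m * P m' = P m' * P m"
    and "(\<Sum>m\<in>A. P m) = 1" and "x \<in> A" "y \<in> A" "x \<noteq> y"
  shows "P x * P y = 0"
proof -
  define h where "h m = P y * P m" for m
  have h_mult: "h a * h b = P y * (P a * P b)" if "a \<in> A" for a b
  proof -
    have "h a * h b = P y * (P a * P y) * P b" by (simp add: h_def mult.assoc)
    also have "\<dots> = (P y * P y) * (P a * P b)"
      using comm[OF that \<open>y \<in> A\<close>] by (simp add: mult.assoc)
    finally show ?thesis using idem[OF \<open>y \<in> A\<close>] by simp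
  qed
  have "\<forall>m\<in>A - {y}. h m * h m = h m"
    using h_mult idem by (simp add: h_def)
  moreover have "\<forall>m\<in>A - {y}. \<forall>m'\<in>A - {y}. h m * h m' = h m' * h m"
    using h_mult comm by simp
  moreover have "sum h (A - {y}) = 0"
  proof -
    have "sum P (A - {y}) = 1 - P y"
      using assms(1,4,6) sum.remove[of A y P] by (simp add: algebra_simps)
    then show ?thesis
      using idem[OF \<open>y \<in> A\<close>] by (simp add: h_def sum_distrib_left[symmetric] right_diff_distrib)
  qed
  ultimately have "\<forall>m\<in>A - {y}. h m = 0"
    by (intro commuting_idempotents_sum_eq_zero) (use assms(1) in simp_all)
  then have "h x = 0"
    using assms(5,7) by blast
  then show ?thesis
    using comm[OF \<open>x \<in> A\<close> \<open>y \<in> A\<close>] by (simp add: h_def)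
qed

lemma rel_iii_of_rel_iv:
  assumes "rel_iv n u"
  shows "rel_iii n u"
  unfolding rel_iii_def
proof (intro allI impI)
  fix i j k l assume "i < n" "j < n" "k < n" "l < n"
  then have comm: "(u i j * u i j) * u k l = u k l * (u i j * u i j)"
    using assms unfolding rel_iv_def by blast
  have "(u i j * u i j) * (u k l * u k l) = ((u i j * u i j) * u k l) * u k l"
    by (simp only: mult.assoc)
  also have "\<dots> = (u k l * (u i j * u i j)) * u k l"
    by (simp only: comm)
  also have "\<dots> = u k l * ((u i j * u i j) * u k l)"
    by (simp only: mult.assoc)
  also have "\<dots> = u k l * (u k l * (u i j * u i j))"
    by (simp only: comm)
  also have "\<dots> = (u k l * u k l) * (u i j * u i j)"
    by (simp only: mult.assoc)
  finally show "(u i j * u i j) * (u k l * u k l) = (u k l * u k l) * (u i j * u i j)" .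
qed

lemma rel_i_selfadjoint: "rel_i n u \<Longrightarrow> i < n \<Longrightarrow> j < n \<Longrightarrow> cstar (u i j) = u i j"
  by (simp add: rel_i_def local_symmetry_def)

lemma rel_i_ii_iii_row_mult_eq_zero:
  assumes "rel_i n u" "rel_ii n u" "rel_iii n u" "a < n" "x < n" "y < n" "x \<noteq> y"
  shows "u a x * u a y = 0"
proof (rule local_symmetry_mult_eq_zero)
  show "local_symmetry (u a x)" "local_symmetry (u a y)"
    using assms by (simp_all add: rel_i_def)
  show "u a x * u a x * (u a y * u a y) = 0"
    using assms
    by (intro commuting_idempotents_sum_one_orthogonal[where P="\<lambda>m. u a m * u a m" and A="{..<n}"])
      (auto simp: rel_i_def rel_ii_def rel_iii_def local_symmetry_def is_projection_def)
qed

lemma rel_i_ii_iii_col_mult_eq_zero: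
  assumes "rel_i n u" "rel_ii n u" "rel_iii n u" "a < n" "b < n" "x < n" "a \<noteq> b"
  shows "u a x * u b x = 0"
proof (rule local_symmetry_mult_eq_zero)
  show "local_symmetry (u a x)" "local_symmetry (u b x)"
    using assms by (simp_all add: rel_i_def)
  show "u a x * u a x * (u b x * u b x) = 0"
    using assms
    by (intro commuting_idempotents_sum_one_orthogonal[where P="\<lambda>m. u m x * u m x" and A="{..<n}"])
      (auto simp: rel_i_def rel_ii_def rel_iii_def local_symmetry_def is_projection_def)
qed

lemma rel_i_ii_iii_orthogonal_mat:
  assumes "rel_i n u" "rel_ii n u" "rel_iii n u"
  shows "orthogonal_mat n u"
  unfolding orthogonal_mat_def
  using assms(2) rel_i_ii_iii_row_mult_eq_zero[OF assms] rel_i_ii_iii_col_mult_eq_zero[OF assms]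
  by (auto simp: rel_ii_def)

text \<open>Conversely, the relations (i) and (ii) follow from orthogonality once distinct entries
  of a row have zero product: then u_{ax}^2 = u_{ax}^2 \<Sum>_y u_{ay}^2 = u_{ax}^4.\<close>

lemma rel_i_ii_of_row_mult_eq_zero:
  fixes u :: "nat \<Rightarrow> nat \<Rightarrow> 'a::unital_cstar_algebra"
  assumes sa: "\<forall>i<n. \<forall>j<n. cstar (u i j) = u i j" and orth: "orthogonal_mat n u"
    and row: "\<And>a x y. a < n \<Longrightarrow> x < n \<Longrightarrow> y < n \<Longrightarrow> x \<noteq> y \<Longrightarrow> u a x * u a y = 0"
  shows "rel_i n u \<and> rel_ii n u"
proof
  have rows: "\<And>i. i < n \<Longrightarrow> (\<Sum>k<n. u i k * u i k) = 1"
    using orth unfolding orthogonal_mat_def by auto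
  then show "rel_ii n u"
    using orth unfolding rel_ii_def orthogonal_mat_def by auto
  show "rel_i n u" unfolding rel_i_def local_symmetry_def is_projection_def
  proof (intro allI impI conjI)
    fix a x assume a: "a < n" and x: "x < n"
    show "cstar (u a x) = u a x" using sa a x by simp
    then show "cstar (u a x * u a x) = u a x * u a x" by (simp add: cstar_mult)
    have "u a x * u a x = u a x * u a x * (\<Sum>y<n. u a y * u a y)" using rows[OF a] by simp
    also have "\<dots> = (\<Sum>y<n. u a x * (u a x * u a y) * u a y)"
      by (simp add: sum_distrib_left mult.assoc)
    also have "\<dots> = (\<Sum>y<n. if y = x then u a x * (u a x * u a x) * u a x else 0)"
      by (intro sum.cong refl) (auto simp: row a x)
    also have "\<dots> = u a x * (u a x * u a x) * u a x"
      using x by simp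
    finally show "u a x * u a x * (u a x * u a x) = u a x * u a x" by (simp add: mult.assoc)
  qed
qed

subsection \<open>The fat crossing and the pair positioner\<close>

definition idx_of_list :: "nat list \<Rightarrow> nat \<Rightarrow> nat" where
  "idx_of_list xs = (\<lambda>r. if r < length xs then xs ! r else undefined)"

lemma idx_of_list_in_multi_idx:
  "length xs = k \<Longrightarrow> \<forall>x\<in>set xs. x < n \<Longrightarrow> idx_of_list xs \<in> multi_idx n k"
  by (auto simp: multi_idx_iff idx_of_list_def)

lemma eq_idx_of_list_iff:
  "i \<in> multi_idx n (length xs) \<Longrightarrow> i = idx_of_list xs \<longleftrightarrow> (\<forall>r<length xs. i r = xs ! r)"
  by (auto simp: multi_idx_iff idx_of_list_def fun_eq_iff)

lemma idx_of_list_nth [simp]: "r < length xs \<Longrightarrow> idx_of_list xs r = xs ! r"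
  by (simp add: idx_of_list_def)

lemma tens_entry_three: "tens_entry u 3 x y = u (x 0) (y 0) * (u (x 1) (y 1) * u (x 2) (y 2))"
  by (simp add: tens_entry_def numeral_eq_Suc upt_rec)

lemma tens_entry_four:
  "tens_entry u 4 x y = u (x 0) (y 0) * (u (x 1) (y 1) * (u (x 2) (y 2) * u (x 3) (y 3)))"
  by (simp add: tens_entry_def numeral_eq_Suc upt_rec)

lemma p_theta_sel [simp]: "upper p_theta = 4" "lower p_theta = 4"
  by (simp_all add: p_theta_def)

lemma p_rho_sel [simp]: "upper p_rho = 3" "lower p_rho = 3"
  by (simp_all add: p_rho_def)

lemma wf_partition_p_theta: "wf_partition p_theta"
  unfolding p_theta_def by (rule wf_partition_mk_part)

lemma wf_partition_p_rho: "wf_partition p_rho"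
  unfolding p_rho_def by (rule wf_partition_mk_part)

lemma delta_p_theta:
  "delta p_theta i j \<longleftrightarrow> i 0 = i 1 \<and> i 1 = j 2 \<and> j 2 = j 3 \<and> i 2 = i 3 \<and> i 3 = j 0 \<and> j 0 = j 1"
proof -
  have pts: "pts 4 4 = {Inl 0, Inl 1, Inl 2, Inl 3, Inr 0, Inr 1, Inr 2, Inr 3}"
    by (auto simp: pts_def pts_iff numeral_eq_Suc less_Suc_eq split: sum.splits)
  show ?thesis
    unfolding p_theta_def delta_mk_part pts by (auto simp: label_def)
qed

lemma delta_p_rho: "delta p_rho i j \<longleftrightarrow> i 0 = i 1 \<and> i 1 = j 1 \<and> j 1 = j 2 \<and> i 2 = j 0"
proof -
  have pts: "pts 3 3 = {Inl 0, Inl 1, Inl 2, Inr 0, Inr 1, Inr 2}"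
    by (auto simp: pts_def pts_iff numeral_eq_Suc less_Suc_eq split: sum.splits)
  show ?thesis
    unfolding p_rho_def delta_mk_part pts by (auto simp: label_def)
qed

lemma intertwining_sums_p_theta:
  fixes u :: "nat \<Rightarrow> nat \<Rightarrow> 'a::ring_1"
  assumes i: "i \<in> multi_idx n 4" and j: "j \<in> multi_idx n 4"
  shows "(\<Sum>i'\<in>multi_idx n 4. (if delta p_theta i' j then 1 else 0) * tens_entry u 4 i' i)
      = (if j 0 = j 1 \<and> j 2 = j 3 then u (j 2) (i 0) * (u (j 2) (i 1) * (u (j 0) (i 2) * u (j 0) (i 3))) else 0)"
    and "(\<Sum>j'\<in>multi_idx n 4. tens_entry u 4 j j' * (if delta p_theta i j' then 1 else 0))
      = (if i 0 = i 1 \<and> i 2 = i 3 then u (j 0) (i 2) * (u (j 1) (i 2) * (u (j 2) (i 0) * u (j 3) (i 0))) else 0)"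
proof -
  have c: "idx_of_list [j 2, j 2, j 0, j 0] \<in> multi_idx n 4" "idx_of_list [i 2, i 2, i 0, i 0] \<in> multi_idx n 4"
    by (simp_all add: idx_of_list_in_multi_idx multi_idx_less[OF i] multi_idx_less[OF j])
  have P: "delta p_theta x j \<longleftrightarrow> (j 0 = j 1 \<and> j 2 = j 3) \<and> x = idx_of_list [j 2, j 2, j 0, j 0]"
    "delta p_theta i x \<longleftrightarrow> (i 0 = i 1 \<and> i 2 = i 3) \<and> x = idx_of_list [i 2, i 2, i 0, i 0]"
    if "x \<in> multi_idx n 4" for x
    using that by (auto simp: delta_p_theta eq_idx_of_list_iff numeral_eq_Suc All_less_Suc)
  show "(\<Sum>i'\<in>multi_idx n 4. (if delta p_theta i' j then 1 else 0) * tens_entry u 4 i' i)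
      = (if j 0 = j 1 \<and> j 2 = j 3 then u (j 2) (i 0) * (u (j 2) (i 1) * (u (j 0) (i 2) * u (j 0) (i 3))) else 0)"
    by (subst sum_indicator_mult_if(1)[OF finite_multi_idx c(1) P(1)]) (simp_all add: tens_entry_four)
  show "(\<Sum>j'\<in>multi_idx n 4. tens_entry u 4 j j' * (if delta p_theta i j' then 1 else 0))
      = (if i 0 = i 1 \<and> i 2 = i 3 then u (j 0) (i 2) * (u (j 1) (i 2) * (u (j 2) (i 0) * u (j 3) (i 0))) else 0)"
    by (subst sum_indicator_mult_if(2)[OF finite_multi_idx c(2) P(2)]) (simp_all add: tens_entry_four)
qed

lemma intertwining_sums_p_rho:
  fixes u :: "nat \<Rightarrow> nat \<Rightarrow> 'a::ring_1"
  assumes i: "i \<in> multi_idx n 3" and j: "j \<in> multi_idx n 3"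
  shows "(\<Sum>i'\<in>multi_idx n 3. (if delta p_rho i' j then 1 else 0) * tens_entry u 3 i' i)
      = (if j 1 = j 2 then u (j 1) (i 0) * (u (j 1) (i 1) * u (j 0) (i 2)) else 0)"
    and "(\<Sum>j'\<in>multi_idx n 3. tens_entry u 3 j j' * (if delta p_rho i j' then 1 else 0))
      = (if i 0 = i 1 then u (j 0) (i 2) * (u (j 1) (i 0) * u (j 2) (i 0)) else 0)"
proof -
  have c: "idx_of_list [j 1, j 1, j 0] \<in> multi_idx n 3" "idx_of_list [i 2, i 0, i 0] \<in> multi_idx n 3"
    by (simp_all add: idx_of_list_in_multi_idx multi_idx_less[OF i] multi_idx_less[OF j])
  have P: "delta p_rho x j \<longleftrightarrow> j 1 = j 2 \<and> x = idx_of_list [j 1, j 1, j 0]"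
    "delta p_rho i x \<longleftrightarrow> i 0 = i 1 \<and> x = idx_of_list [i 2, i 0, i 0]"
    if "x \<in> multi_idx n 3" for x
    using that by (auto simp: delta_p_rho eq_idx_of_list_iff numeral_eq_Suc All_less_Suc)
  show "(\<Sum>i'\<in>multi_idx n 3. (if delta p_rho i' j then 1 else 0) * tens_entry u 3 i' i)
      = (if j 1 = j 2 then u (j 1) (i 0) * (u (j 1) (i 1) * u (j 0) (i 2)) else 0)"
    by (subst sum_indicator_mult_if(1)[OF finite_multi_idx c(1) P(1)]) (simp_all add: tens_entry_three)
  show "(\<Sum>j'\<in>multi_idx n 3. tens_entry u 3 j j' * (if delta p_rho i j' then 1 else 0))
      = (if i 0 = i 1 then u (j 0) (i 2) * (u (j 1) (i 0) * u (j 2) (i 0)) else 0)"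
    by (subst sum_indicator_mult_if(2)[OF finite_multi_idx c(2) P(2)]) (simp_all add: tens_entry_three)
qed

lemma p_theta_equation_of_relations:
  fixes u :: "nat \<Rightarrow> nat \<Rightarrow> 'a::unital_cstar_algebra"
  assumes rel: "rel_i n u" "rel_ii n u" "rel_iii n u"
    and v: "a < n" "b < n" "c < n" "d < n" "e < n" "f < n" "g < n" "h < n"
  shows "(if a = b \<and> c = d then u c e * (u c f * (u a g * u a h)) else 0)
       = (if e = f \<and> g = h then u a g * (u b g * (u c e * u d e)) else 0)"
proof -
  note row = rel_i_ii_iii_row_mult_eq_zero[OF rel] and col = rel_i_ii_iii_col_mult_eq_zero[OF rel]
  have "u c e * (u c f * (u a g * u a h)) = 0" if "e \<noteq> f \<or> g \<noteq> h"
    using that row[of c e f] row[of a g h] v by (metis mult.assoc mult_zero_left mult_zero_right)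
  moreover have "u a g * (u b g * (u c e * u d e)) = 0" if "a \<noteq> b \<or> c \<noteq> d"
    using that col[of a b g] col[of c d e] v by (metis mult.assoc mult_zero_left mult_zero_right)
  moreover have "u c e * (u c e * (u a g * u a g)) = u a g * (u a g * (u c e * u c e))"
    using rel(3) v unfolding rel_iii_def by (simp add: mult.assoc)
  ultimately show ?thesis by auto
qed

lemma p_rho_equation_of_relations:
  fixes u :: "nat \<Rightarrow> nat \<Rightarrow> 'a::unital_cstar_algebra"
  assumes rel: "rel_i n u" "rel_ii n u" "rel_iv n u"
    and v: "a < n" "b < n" "c < n" "e < n" "f < n" "g < n"
  shows "(if b = c then u b e * (u b f * u a g) else 0) = (if e = f then u a g * (u b e * u c e) else 0)"
proof -
  note rel_iii = rel(1,2) rel_iii_of_rel_iv[OF rel(3)]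
  have "u b e * (u b f * u a g) = 0" if "e \<noteq> f"
    using that rel_i_ii_iii_row_mult_eq_zero[OF rel_iii, of b e f] v by (metis mult.assoc mult_zero_left)
  moreover have "u a g * (u b e * u c e) = 0" if "b \<noteq> c"
    using that rel_i_ii_iii_col_mult_eq_zero[OF rel_iii, of b c e] v by simp
  moreover have "u b e * (u b e * u a g) = u a g * (u b e * u b e)"
    using rel(3) v unfolding rel_iv_def by (simp add: mult.assoc)
  ultimately show ?thesis by auto
qed

lemma intertwines_p_theta_of_relations:
  fixes u :: "nat \<Rightarrow> nat \<Rightarrow> 'a::unital_cstar_algebra"
  assumes "rel_i n u" "rel_ii n u" "rel_iii n u"
  shows "intertwines n u p_theta"
  unfolding intertwines_def p_theta_sel
proof (intro ballI)
  fix i j assume i: "i \<in> multi_idx n 4" and j: "j \<in> multi_idx n 4"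
  show "(\<Sum>i'\<in>multi_idx n 4. (if delta p_theta i' j then 1 else 0) * tens_entry u 4 i' i) =
        (\<Sum>j'\<in>multi_idx n 4. tens_entry u 4 j j' * (if delta p_theta i j' then 1 else 0))"
    unfolding intertwining_sums_p_theta[OF i j]
    by (rule p_theta_equation_of_relations[OF assms]) (simp_all add: multi_idx_less[OF i] multi_idx_less[OF j])
qed

lemma intertwines_p_rho_of_relations:
  fixes u :: "nat \<Rightarrow> nat \<Rightarrow> 'a::unital_cstar_algebra"
  assumes "rel_i n u" "rel_ii n u" "rel_iv n u"
  shows "intertwines n u p_rho"
  unfolding intertwines_def p_rho_sel
proof (intro ballI)
  fix i j assume i: "i \<in> multi_idx n 3" and j: "j \<in> multi_idx n 3"
  show "(\<Sum>i'\<in>multi_idx n 3. (if delta p_rho i' j then 1 else 0) * tens_entry u 3 i' i) =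
        (\<Sum>j'\<in>multi_idx n 3. tens_entry u 3 j j' * (if delta p_rho i j' then 1 else 0))"
    unfolding intertwining_sums_p_rho[OF i j]
    by (rule p_rho_equation_of_relations[OF assms]) (simp_all add: multi_idx_less[OF i] multi_idx_less[OF j])
qed

lemma row_sum_squares_one:
  "orthogonal_mat n u \<Longrightarrow> a < n \<Longrightarrow> (\<Sum>z<n. u a z * u a z) = 1"
  by (simp add: orthogonal_mat_def)

text \<open>Evaluating the intertwining relation of the fat crossing at labels (x, y, z, z) over
  (a, a, a, a) and summing over z gives u_{ax} u_{ay} = 0 for x \<noteq> y.\<close>

lemma relations_of_intertwines_p_theta:
  fixes u :: "nat \<Rightarrow> nat \<Rightarrow> 'a::unital_cstar_algebra"
  assumes sa: "\<forall>i<n. \<forall>j<n. cstar (u i j) = u i j" and orth: "orthogonal_mat n u"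
    and T: "intertwines n u p_theta"
  shows "rel_i n u \<and> rel_ii n u \<and> rel_iii n u"
proof -
  have eq: "(if j 0 = j 1 \<and> j 2 = j 3 then u (j 2) (i 0) * (u (j 2) (i 1) * (u (j 0) (i 2) * u (j 0) (i 3))) else 0)
     = (if i 0 = i 1 \<and> i 2 = i 3 then u (j 0) (i 2) * (u (j 1) (i 2) * (u (j 2) (i 0) * u (j 3) (i 0))) else 0)"
    if "i \<in> multi_idx n 4" "j \<in> multi_idx n 4" for i j
  proof -
    have "(\<Sum>i'\<in>multi_idx n 4. (if delta p_theta i' j then 1 else 0) * tens_entry u 4 i' i) =
          (\<Sum>j'\<in>multi_idx n 4. tens_entry u 4 j j' * (if delta p_theta i j' then 1 else 0))"
      using T that unfolding intertwines_def p_theta_sel by blast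
    then show ?thesis unfolding intertwining_sums_p_theta[OF that] .
  qed
  have row: "u a x * u a y = 0" if row_idx: "a < n" "x < n" "y < n" "x \<noteq> y" for a x y
  proof -
    have "u a x * (u a y * (u a z * u a z)) = 0" if "z < n" for z
      using eq[of "idx_of_list [x, y, z, z]" "idx_of_list [a, a, a, a]"] row_idx that
      by (simp add: idx_of_list_in_multi_idx)
    then have "(\<Sum>z<n. u a x * (u a y * (u a z * u a z))) = 0" by simp
    moreover have "u a x * u a y = u a x * u a y * (\<Sum>z<n. u a z * u a z)"
      using row_sum_squares_one[OF orth \<open>a < n\<close>] by simp
    ultimately show ?thesis by (simp add: sum_distrib_left mult.assoc)
  qed
  have "rel_iii n u"
    unfolding rel_iii_def
  proof (intro allI impI)
    fix a c b d assume "a < n" "c < n" "b < n" "d < n"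
    then have "u a c * (u a c * (u b d * u b d)) = u b d * (u b d * (u a c * u a c))"
      using eq[of "idx_of_list [c, c, d, d]" "idx_of_list [b, b, a, a]"] by (simp add: idx_of_list_in_multi_idx)
    then show "u a c * u a c * (u b d * u b d) = u b d * u b d * (u a c * u a c)"
      by (simp add: mult.assoc)
  qed
  then show ?thesis using rel_i_ii_of_row_mult_eq_zero[OF sa orth row] by simp
qed

lemma relations_of_intertwines_p_rho:
  fixes u :: "nat \<Rightarrow> nat \<Rightarrow> 'a::unital_cstar_algebra"
  assumes sa: "\<forall>i<n. \<forall>j<n. cstar (u i j) = u i j" and orth: "orthogonal_mat n u"
    and T: "intertwines n u p_rho"
  shows "rel_i n u \<and> rel_ii n u \<and> rel_iv n u"
proof -
  have eq: "(if j 1 = j 2 then u (j 1) (i 0) * (u (j 1) (i 1) * u (j 0) (i 2)) else 0)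
     = (if i 0 = i 1 then u (j 0) (i 2) * (u (j 1) (i 0) * u (j 2) (i 0)) else 0)"
    if "i \<in> multi_idx n 3" "j \<in> multi_idx n 3" for i j
  proof -
    have "(\<Sum>i'\<in>multi_idx n 3. (if delta p_rho i' j then 1 else 0) * tens_entry u 3 i' i) =
          (\<Sum>j'\<in>multi_idx n 3. tens_entry u 3 j j' * (if delta p_rho i j' then 1 else 0))"
      using T that unfolding intertwines_def p_rho_sel by blast
    then show ?thesis unfolding intertwining_sums_p_rho[OF that] .
  qed
  have row: "u a x * u a y = 0" if row_idx: "a < n" "x < n" "y < n" "x \<noteq> y" for a x y
  proof -
    have "u a x * (u a y * u a z) = 0" if "z < n" for z
      using eq[of "idx_of_list [x, y, z]" "idx_of_list [a, a, a]"] row_idx that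
      by (simp add: idx_of_list_in_multi_idx)
    then have "(\<Sum>z<n. u a x * (u a y * u a z) * u a z) = 0" by simp
    moreover have "u a x * u a y = u a x * u a y * (\<Sum>z<n. u a z * u a z)"
      using row_sum_squares_one[OF orth \<open>a < n\<close>] by simp
    ultimately show ?thesis by (simp add: sum_distrib_left mult.assoc)
  qed
  have "rel_iv n u"
    unfolding rel_iv_def
  proof (intro allI impI)
    fix a x b z assume "a < n" "x < n" "b < n" "z < n"
    then have "u a x * (u a x * u b z) = u b z * (u a x * u a x)"
      using eq[of "idx_of_list [x, x, z]" "idx_of_list [b, a, a]"] by (simp add: idx_of_list_in_multi_idx)
    then show "u a x * u a x * u b z = u b z * (u a x * u a x)"
      by (simp add: mult.assoc)
  qed
  then show ?thesis using rel_i_ii_of_row_mult_eq_zero[OF sa orth row] by simp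
qed

lemma easy_relations_gen_cat:
  fixes u :: "nat \<Rightarrow> nat \<Rightarrow> 'a::unital_cstar_algebra"
  assumes "0 < n" "wf_partition g" "\<forall>i<n. \<forall>j<n. cstar (u i j) = u i j" "orthogonal_mat n u"
    and "intertwines n u g"
  shows "easy_relations (gen_cat g) n u"
proof -
  interpret selfadjoint_orthogonal n u
    using assms(3,4) by unfold_locales (auto simp: orthogonal_mat_def)
  show ?thesis
    using gen_cat_intertwiner[OF assms(1,2)] assms(3-5)
    by (simp add: easy_relations_def intertwines_iff_intertwiner)
qed

lemma easy_relations_p_theta_iff:
  fixes u :: "nat \<Rightarrow> nat \<Rightarrow> 'a::unital_cstar_algebra"
  assumes "0 < n"
  shows "easy_relations (gen_cat p_theta) n u \<longleftrightarrow> rel_i n u \<and> rel_ii n u \<and> rel_iii n u"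
proof
  assume "easy_relations (gen_cat p_theta) n u"
  then show "rel_i n u \<and> rel_ii n u \<and> rel_iii n u"
    by (intro relations_of_intertwines_p_theta) (auto simp: easy_relations_def intro: gen_cat.gen)
next
  assume rel: "rel_i n u \<and> rel_ii n u \<and> rel_iii n u"
  then show "easy_relations (gen_cat p_theta) n u"
    by (intro easy_relations_gen_cat assms)
      (auto simp: wf_partition_p_theta rel_i_selfadjoint
        intro: rel_i_ii_iii_orthogonal_mat intertwines_p_theta_of_relations)
qed

lemma easy_relations_p_rho_iff:
  fixes u :: "nat \<Rightarrow> nat \<Rightarrow> 'a::unital_cstar_algebra"
  assumes "0 < n"
  shows "easy_relations (gen_cat p_rho) n u \<longleftrightarrow> rel_i n u \<and> rel_ii n u \<and> rel_iv n u"
proof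
  assume "easy_relations (gen_cat p_rho) n u"
  then show "rel_i n u \<and> rel_ii n u \<and> rel_iv n u"
    by (intro relations_of_intertwines_p_rho) (auto simp: easy_relations_def intro: gen_cat.gen)
next
  assume rel: "rel_i n u \<and> rel_ii n u \<and> rel_iv n u"
  then show "easy_relations (gen_cat p_rho) n u"
    by (intro easy_relations_gen_cat assms)
      (auto simp: wf_partition_p_rho rel_i_selfadjoint
        intro: rel_i_ii_iii_orthogonal_mat rel_iii_of_rel_iv intertwines_p_rho_of_relations)
qed

theorem mainTheorem16:
  fixes n :: nat and u :: "nat \<Rightarrow> nat \<Rightarrow> 'a::unital_cstar_algebra"
  assumes "1 \<le> n"
  shows "(easy_relations (gen_cat p_theta) n u \<longleftrightarrow> rel_i n u \<and> rel_ii n u \<and> rel_iii n u)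
       \<and> (easy_relations (gen_cat p_rho) n u \<longleftrightarrow> rel_i n u \<and> rel_ii n u \<and> rel_iv n u)"
proof -
  have "0 < n" using assms by simp
  then show ?thesis
    by (simp add: easy_relations_p_theta_iff easy_relations_p_rho_iff)
qed

end
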